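(* Let $k\ge1$ and let $(Z_{\mathbf j})_{\mathbf j\ge\mathbf 1}$, $\mathbf j\in(\mathbb N^* )^k$, be random variables with values in a Polish space such that almost surely $Z_{\mathbf j}=\tau((U_{\mathbf j\odot\mathbf e})_{\mathbf e\in\{0,1\}^k\setminus\{\mathbf 0\}})$ for all $\mathbf j$, where $(U_{\mathbf c})_{\mathbf c\in\mathbb N^k\setminus\{\mathbf 0\}}$ are mutually independent uniform $[0,1]$ variables and $\tau$ is measurable. Let $\mathcal G$ be a pointwise measurable class of functions $g$ with $g(Z_{\mathbf 1})$ integrable, and let $\Phi:\mathbb R^+\to\mathbb R$ be non-decreasing and convex. Then for every $\mathbf C=(C_1,\dots,C_k)\in(\mathbb N^* )^k$, $$E\Big[\Phi\Big(\sup_{g\in\mathcal G}\Big|\frac1{\Pi_C}\sum_{\mathbf 1\le\mathbf j\le\mathbf C}g(Z_{\mathbf j})-E[g(Z_{\mathbf 1})]\Big|\Big)\Big]\le\frac1{2^k-1}\sum_{\mathbf e\in\{0,1\}^k\setminus\{\mathbf 0\}}E\Big[\Phi\Big(2(2^k-1)\sup_{g\in\mathcal G}\Big|\frac1{\Pi_C}\sum_{\mathbf 1\le\mathbf j\le\mathbf C}\epsilon_{\mathbf j\odot\mathbf e}\,g(Z_{\mathbf j})\Big|\Big)\Big],$$ where $(\epsilon_{\mathbf c})_{\mathbf c\in\mathbb N^k}$ are i.i.d. Rademacher variables ($P(\epsilon=1)=P(\epsilon=-1)=1/2$) independent of $(Z_{\mathbf j})_{\mathbf j\ge\mathbf 1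}$.
   Context: $\odot$ is the componentwise product of $k$-tuples, $\mathbf 0,\mathbf 1$ the constant $k$-tuples, $\le$ the componentwise order, $\Pi_C=\prod_iC_i$. A class $\mathcal G$ is pointwise measurable if it contains a countable subclass such that every element of $\mathcal G$ is a pointwise limit of elements of the subclass. *)

theory Defs
  imports "HOL-Probability.Probability"
begin

definition odot :: "('k \<Rightarrow> nat) \<Rightarrow> ('k \<Rightarrow> nat) \<Rightarrow> ('k \<Rightarrow> nat)" where
  "odot j e = (\<lambda>i. j i * e i)"

definition pointwise_measurable :: "('b \<Rightarrow> real) set \<Rightarrow> bool" where
  "pointwise_measurable G \<longleftrightarrow>
     (\<exists>G0 \<subseteq> G. countable G0 \<and>
        (\<forall>g\<in>G. \<exists>s. (\<forall>n. s n \<in> G0) \<and> (\<forall>x. (\<lambda>n. s n x) \<longlonglongrightarrow> g x)))"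

text \<open>Extension of \<Phi> : [0,\<infinity>) \<rightarrow> \<real> to [0,\<infinity>] (value at \<infinity> = supremum, i.e. the limit,
  since \<Phi> is non-decreasing).\<close>
definition Phi_ext :: "(real \<Rightarrow> real) \<Rightarrow> ennreal \<Rightarrow> ereal" where
  "Phi_ext \<Phi> x = (if x = \<top> then (SUP t\<in>{0..}. ereal (\<Phi> t)) else ereal (\<Phi> (enn2real x)))"

text \<open>Expectation (in (-\<infinity>,\<infinity>]) of a random variable bounded below by c.\<close>
definition lexp :: "'a measure \<Rightarrow> real \<Rightarrow> ('a \<Rightarrow> ereal) \<Rightarrow> ereal" where
  "lexp M c Y = ereal c + enn2ereal (\<integral>\<^sup>+ \<omega>. e2ennreal (Y \<omega> - ereal c) \<partial>M)"

end

theory Submission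
  imports Defs
begin

text \<open>
  By the representation hypothesis the array is a function \<open>Z_j = Z_of j U\<close> of the vector \<open>U\<close> of
  uniforms indexed by \<open>0 \<noteq> c \<le> C\<close>, whose law \<open>PU\<close> is a product measure. Enumerate the patterns
  \<open>e \<in> {0,1}^k - {0}\<close> as \<open>e_1, ..., e_K\<close>, \<open>K = 2^k - 1\<close>. For two independent copies \<open>u, u'\<close> of \<open>U\<close>
  the hybrid \<open>W_m\<close> takes the coordinates \<open>c\<close> whose zero pattern is one of \<open>e_1, ..., e_m\<close> from \<open>u\<close>
  and all other coordinates from \<open>u'\<close>. As \<open>W_0 = u'\<close>, \<open>W_K = u\<close> and every \<open>W_m\<close> has law \<open>PU\<close>,
  telescoping bounds the deviation of the empirical mean at \<open>u\<close> by the sum of the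
  \<open>u'\<close>-expectations of the increments \<open>W_m \<rightarrow> W_(m+1)\<close>, and Jensen's inequality turns \<open>\<Phi>\<close> of this
  sum into an average of \<open>K\<close> terms.

  In the \<open>m\<close>-th term, exchanging \<open>u_c\<close> and \<open>u'_c\<close> at those \<open>c\<close> of pattern \<open>e_m\<close> where a sign \<open>s_c\<close>
  equals \<open>-1\<close> preserves the joint law. Since \<open>Z_j\<close> reads exactly one coordinate of pattern \<open>e_m\<close>,
  namely \<open>j \<odot> e_m\<close>, the exchange multiplies the \<open>j\<close>-th increment by \<open>s (j \<odot> e_m)\<close>. The triangle
  inequality and convexity then bound the term by \<open>E \<Phi>(2K sup_g |\<Sum>_j s (j \<odot> e_m) g(Z_j)| / \<Pi>_C)\<close>
  for every fixed sign vector \<open>s\<close>, and integrating over the Rademacher signs, which are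
  independent of \<open>Z\<close>, gives the claim.
\<close>

section \<open>Jensen's inequality for the extension of \<Phi> to [0, \<infinity>]\<close>

definition Phi_excess :: "(real \<Rightarrow> real) \<Rightarrow> ennreal \<Rightarrow> ennreal" where
  "Phi_excess \<Phi> x = e2ennreal (Phi_ext \<Phi> x - ereal (\<Phi> 0))"

lemma lexp_Phi_ext:
  "lexp M (\<Phi> 0) (\<lambda>\<omega>. Phi_ext \<Phi> (f \<omega>)) = ereal (\<Phi> 0) + enn2ereal (\<integral>\<^sup>+\<omega>. Phi_excess \<Phi> (f \<omega>) \<partial>M)"
  by (simp add: lexp_def Phi_excess_def)

lemma Phi_excess_ennreal: "t \<ge> 0 \<Longrightarrow> Phi_excess \<Phi> (ennreal t) = ennreal (\<Phi> t - \<Phi> 0)"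
  by (simp add: Phi_excess_def Phi_ext_def)

lemma mono_Phi_excess:
  assumes "mono_on {0..} \<Phi>"
  shows "mono (Phi_excess \<Phi>)"
proof (rule monoI)
  fix x y :: ennreal assume xy: "x \<le> y"
  have "Phi_ext \<Phi> x \<le> Phi_ext \<Phi> y"
  proof (cases "y = \<top>")
    case True
    show ?thesis
    proof (cases "x = \<top>")
      case False
      then show ?thesis using True
        by (auto simp: Phi_ext_def intro!: SUP_upper2[of "enn2real x"])
    qed (simp add: True)
  next
    case False
    then have "x \<noteq> \<top>" using xy top_unique by auto
    with False xy show ?thesis
      by (auto simp: Phi_ext_def less_top intro!: mono_onD[OF assms] enn2real_mono)
  qed
  then show "Phi_excess \<Phi> x \<le> Phi_excess \<Phi> y"
    unfolding Phi_excess_def by (intro e2ennreal_mono ereal_minus_mono) auto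
qed

lemma borel_measurable_mono_linorder:
  fixes f :: "'a::{complete_linorder, linorder_topology} \<Rightarrow> 'b::{linorder_topology, second_countable_topology}"
  assumes mono: "mono f"
  shows "f \<in> borel_measurable borel"
proof (rule borel_measurableI_greater)
  fix a :: 'b
  define S where "S = {x. a < f x}"
  have up: "x \<in> S \<Longrightarrow> x \<le> y \<Longrightarrow> y \<in> S" for x y
    using monoD[OF mono] by (auto simp: S_def intro: less_le_trans)
  have "S \<in> sets borel"
  proof (cases "S = {}")
    case False
    have "{Inf S<..} \<subseteq> S"
      using up by (auto simp: Inf_less_iff)
    moreover have "S \<subseteq> {Inf S..}" by (auto intro: Inf_lower)
    ultimately have "S = {Inf S<..} \<union> (S \<inter> {Inf S})" by (auto simp: less_le)
    moreover have "S \<inter> {Inf S} \<in> sets borel"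
      by (cases "Inf S \<in> S") (auto simp: Int_absorb1 Int_absorb2)
    ultimately show ?thesis by (metis sets.Un borel_open open_greaterThan)
  qed simp
  then show "{x \<in> space borel. a < f x} \<in> sets borel" by (simp add: S_def)
qed

lemma borel_measurable_Phi_excess[measurable]:
  "mono_on {0..} \<Phi> \<Longrightarrow> Phi_excess \<Phi> \<in> borel_measurable borel"
  by (rule borel_measurable_mono_linorder[OF mono_Phi_excess])

lemma Phi_excess_top_le_SUP: "Phi_excess \<Phi> \<top> \<le> (SUP t\<in>{0::real..}. Phi_excess \<Phi> (ennreal t))"
proof -
  have "(SUP t\<in>{0..}. ereal (\<Phi> t)) \<le> enn2ereal (SUP t\<in>{0::real..}. Phi_excess \<Phi> (ennreal t)) + ereal (\<Phi> 0)"
  proof (rule SUP_least)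
    fix t :: real assume t: "t \<in> {0..}"
    have "ennreal (\<Phi> t - \<Phi> 0) \<le> (SUP t\<in>{0::real..}. Phi_excess \<Phi> (ennreal t))"
      using t by (intro SUP_upper2[of t]) (auto simp: Phi_excess_ennreal)
    then have "enn2ereal (ennreal (\<Phi> t - \<Phi> 0)) \<le> enn2ereal (SUP t\<in>{0::real..}. Phi_excess \<Phi> (ennreal t))"
      by (metis less_eq_ennreal.rep_eq)
    moreover have "ereal (\<Phi> t - \<Phi> 0) \<le> enn2ereal (ennreal (\<Phi> t - \<Phi> 0))"
      by (cases "\<Phi> t - \<Phi> 0 \<ge> 0") (auto simp: ennreal_neg zero_ennreal.rep_eq)
    ultimately have "ereal (\<Phi> t - \<Phi> 0) \<le> enn2ereal (SUP t\<in>{0::real..}. Phi_excess \<Phi> (ennreal t))"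
      by order
    then show "ereal (\<Phi> t) \<le> enn2ereal (SUP t\<in>{0::real..}. Phi_excess \<Phi> (ennreal t)) + ereal (\<Phi> 0)"
      using ereal_minus_le[of "ereal (\<Phi> 0)" "ereal (\<Phi> t)"] by simp
  qed
  then have "(SUP t\<in>{0..}. ereal (\<Phi> t)) - ereal (\<Phi> 0) \<le> enn2ereal (SUP t\<in>{0::real..}. Phi_excess \<Phi> (ennreal t))"
    by (simp add: ereal_minus_le)
  then have "e2ennreal ((SUP t\<in>{0..}. ereal (\<Phi> t)) - ereal (\<Phi> 0))
      \<le> e2ennreal (enn2ereal (SUP t\<in>{0::real..}. Phi_excess \<Phi> (ennreal t)))"
    by (rule e2ennreal_mono)
  then show ?thesis by (simp add: Phi_excess_def Phi_ext_def)
qed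

lemma mono_comp_max0:
  fixes \<Phi> :: "real \<Rightarrow> real"
  assumes "mono_on {0..} \<Phi>"
  shows "mono (\<lambda>x. \<Phi> (max 0 x))"
  by (rule monoI) (auto intro!: mono_onD[OF assms] max.mono)

lemma convex_on_comp_max0:
  fixes \<Phi> :: "real \<Rightarrow> real"
  assumes mono: "mono_on {0..} \<Phi>" and conv: "convex_on {0..} \<Phi>"
  shows "convex_on UNIV (\<lambda>x. \<Phi> (max 0 x))"
proof (rule convex_onI)
  fix t x y :: real assume t: "0 < t" "t < 1"
  have "max 0 ((1 - t) *\<^sub>R x + t *\<^sub>R y) \<le> (1 - t) *\<^sub>R max 0 x + t *\<^sub>R max 0 y"
    using t mult_pos_neg[of t y] mult_pos_neg[of "1-t" x] mult_nonneg_nonneg[of t y]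
      mult_nonneg_nonneg[of "1-t" x]
    by (auto simp: max_def)
  then have "\<Phi> (max 0 ((1 - t) *\<^sub>R x + t *\<^sub>R y)) \<le> \<Phi> ((1 - t) *\<^sub>R max 0 x + t *\<^sub>R max 0 y)"
    using t by (intro mono_onD[OF mono]) auto
  also have "\<dots> \<le> (1 - t) * \<Phi> (max 0 x) + t * \<Phi> (max 0 y)"
    using t by (intro convex_onD[OF conv]) auto
  finally show "\<Phi> (max 0 ((1 - t) *\<^sub>R x + t *\<^sub>R y)) \<le> (1 - t) * \<Phi> (max 0 x) + t * \<Phi> (max 0 y)" .
qed auto

lemma nn_integral_diff_eq_top_if_not_integrable:
  assumes Q: "prob_space Q" and h[measurable]: "h \<in> borel_measurable Q"
    and ge: "\<And>x. c \<le> h x" and not_int: "\<not> integrable Q h"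
  shows "(\<integral>\<^sup>+x. ennreal (h x - c) \<partial>Q) = \<top>"
proof (rule ccontr)
  interpret prob_space Q by fact
  assume "(\<integral>\<^sup>+x. ennreal (h x - c) \<partial>Q) \<noteq> \<top>"
  then have "integrable Q (\<lambda>x. h x - c)"
    using ge by (intro integrableI_nonneg) (auto simp: less_top)
  then have "integrable Q (\<lambda>x. (h x - c) + c)"
    by (intro Bochner_Integration.integrable_add) auto
  with not_int show False by simp
qed

lemma ennreal_Phi_expectation_le:
  fixes f :: "'x \<Rightarrow> real"
  assumes mono: "mono_on {0..} \<Phi>" and conv: "convex_on {0..} \<Phi>"
    and Q: "prob_space Q" and f: "integrable Q f" and f_nonneg: "\<And>x. 0 \<le> f x"
  shows "ennreal (\<Phi> (prob_space.expectation Q f) - \<Phi> 0) \<le> (\<integral>\<^sup>+x. ennreal (\<Phi> (f x) - \<Phi> 0) \<partial>Q)"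
proof -
  interpret prob_space Q by fact
  define q where "q x = \<Phi> (max 0 x)" for x
  have [measurable]: "f \<in> borel_measurable Q" using f by auto
  have [measurable]: "q \<in> borel_measurable borel"
    unfolding q_def by (rule borel_measurable_mono[OF mono_comp_max0[OF mono]])
  have q_f: "q (f x) = \<Phi> (f x)" for x
    using f_nonneg by (simp add: q_def)
  have q_ge: "\<Phi> 0 \<le> q (f x)" for x
    using f_nonneg by (auto simp: q_def intro!: mono_onD[OF mono])
  have "0 \<le> expectation f" using f_nonneg by (simp add: integral_nonneg_AE)
  then have lhs: "\<Phi> (expectation f) = q (expectation f)" by (simp add: q_def)
  show ?thesis
  proof (cases "integrable Q (\<lambda>x. q (f x))")
    case True
    have "q (expectation f) \<le> expectation (\<lambda>x. q (f x))"
      by (rule jensens_inequality[where I=UNIV and a=0 and b=0])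
        (use f True convex_on_comp_max0[OF mono conv] in \<open>auto simp: q_def\<close>)
    also have "\<dots> - \<Phi> 0 = expectation (\<lambda>x. q (f x) - \<Phi> 0)"
      using True by (simp add: prob_space)
    also have "ennreal \<dots> = (\<integral>\<^sup>+x. ennreal (q (f x) - \<Phi> 0) \<partial>Q)"
      using True q_ge by (intro nn_integral_eq_integral[symmetric]) auto
    finally show ?thesis unfolding lhs q_f by (simp add: ennreal_leI)
  next
    case False
    then have "(\<integral>\<^sup>+x. ennreal (q (f x) - \<Phi> 0) \<partial>Q) = \<top>"
      using q_ge by (intro nn_integral_diff_eq_top_if_not_integrable[OF Q]) auto
    then show ?thesis unfolding q_f by simp
  qed
qed

lemma Phi_excess_nn_integral_le_finite:
  assumes mono: "mono_on {0..} \<Phi>" and conv: "convex_on {0..} \<Phi>"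
    and Q: "prob_space Q" and f[measurable]: "f \<in> borel_measurable Q"
    and fin: "(\<integral>\<^sup>+x. f x \<partial>Q) < \<top>"
  shows "Phi_excess \<Phi> (\<integral>\<^sup>+x. f x \<partial>Q) \<le> (\<integral>\<^sup>+x. Phi_excess \<Phi> (f x) \<partial>Q)"
proof -
  interpret prob_space Q by fact
  define fr where "fr x = enn2real (f x)" for x
  have [measurable]: "fr \<in> borel_measurable Q" unfolding fr_def by measurable
  have fr_nonneg: "0 \<le> fr x" for x by (simp add: fr_def)
  have ae: "AE x in Q. f x = ennreal (fr x)"
    using nn_integral_PInf_AE[OF f] fin by (auto simp: fr_def less_top)
  then have eq: "(\<integral>\<^sup>+x. f x \<partial>Q) = (\<integral>\<^sup>+x. ennreal (fr x) \<partial>Q)"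
    by (rule nn_integral_cong_AE)
  have int: "integrable Q fr"
    using fin eq fr_nonneg by (intro integrableI_nonneg) (auto simp: less_top)
  have "Phi_excess \<Phi> (\<integral>\<^sup>+x. f x \<partial>Q) = ennreal (\<Phi> (expectation fr) - \<Phi> 0)"
    using eq nn_integral_eq_integral[OF int] fr_nonneg
    by (simp add: Phi_excess_ennreal integral_nonneg_AE)
  also have "\<dots> \<le> (\<integral>\<^sup>+x. ennreal (\<Phi> (fr x) - \<Phi> 0) \<partial>Q)"
    by (rule ennreal_Phi_expectation_le[OF mono conv Q int fr_nonneg])
  also have "\<dots> = (\<integral>\<^sup>+x. Phi_excess \<Phi> (f x) \<partial>Q)"
    using ae by (intro nn_integral_cong_AE) (auto simp: Phi_excess_ennreal fr_nonneg elim!: eventually_mono)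
  finally show ?thesis .
qed

lemma SUP_min_of_nat_ennreal: "(SUP n. min (a::ennreal) (of_nat n)) = a"
proof -
  have "(SUP n. min a (of_nat n)) = min a (SUP n. of_nat n :: ennreal)"
    using inf_SUP[of a "\<lambda>n::nat. of_nat n :: ennreal" UNIV] by (simp add: inf_min)
  then show ?thesis by (simp add: ennreal_SUP_of_nat_eq_top)
qed

lemma Phi_excess_nn_integral_le:
  assumes mono: "mono_on {0..} \<Phi>" and conv: "convex_on {0..} \<Phi>"
    and Q: "prob_space Q" and f[measurable]: "f \<in> borel_measurable Q"
  shows "Phi_excess \<Phi> (\<integral>\<^sup>+x. f x \<partial>Q) \<le> (\<integral>\<^sup>+x. Phi_excess \<Phi> (f x) \<partial>Q)"
proof (cases "(\<integral>\<^sup>+x. f x \<partial>Q) < \<top>")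
  case True
  then show ?thesis using Phi_excess_nn_integral_le_finite[OF assms] by simp
next
  case False
  then have top: "(\<integral>\<^sup>+x. f x \<partial>Q) = \<top>" using top.not_eq_extremum by blast
  interpret prob_space Q by fact
  define f_n where "f_n n x = min (f x) (of_nat n)" for n :: nat and x
  have [measurable]: "f_n n \<in> borel_measurable Q" for n unfolding f_n_def by measurable
  have "(SUP n. \<integral>\<^sup>+x. f_n n x \<partial>Q) = (\<integral>\<^sup>+x. (SUP n. f_n n x) \<partial>Q)"
    by (rule nn_integral_monotone_convergence_SUP[symmetric])
       (auto simp: incseq_def le_fun_def f_n_def min.coboundedI2)
  also have "\<dots> = \<top>" unfolding f_n_def SUP_min_of_nat_ennreal top ..
  finally have sup_top: "(SUP n. \<integral>\<^sup>+x. f_n n x \<partial>Q) = \<top>" .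
  have "Phi_excess \<Phi> \<top> \<le> (SUP t\<in>{0::real..}. Phi_excess \<Phi> (ennreal t))"
    by (rule Phi_excess_top_le_SUP)
  also have "\<dots> \<le> (\<integral>\<^sup>+x. Phi_excess \<Phi> (f x) \<partial>Q)"
  proof (rule SUP_least)
    fix t :: real assume "t \<in> {0..}"
    have "ennreal t < (SUP n. \<integral>\<^sup>+x. f_n n x \<partial>Q)" unfolding sup_top by simp
    then obtain n where n: "ennreal t < (\<integral>\<^sup>+x. f_n n x \<partial>Q)" by (auto simp: less_SUP_iff)
    have "(\<integral>\<^sup>+x. f_n n x \<partial>Q) \<le> (\<integral>\<^sup>+x. of_nat n \<partial>Q)"
      by (intro nn_integral_mono) (simp add: f_n_def)
    also have "\<dots> < \<top>" by (simp add: emeasure_space_1 of_nat_less_top)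
    finally have fin: "(\<integral>\<^sup>+x. f_n n x \<partial>Q) < \<top>" .
    have "Phi_excess \<Phi> (ennreal t) \<le> Phi_excess \<Phi> (\<integral>\<^sup>+x. f_n n x \<partial>Q)"
      using n by (intro monoD[OF mono_Phi_excess[OF mono]]) simp
    also have "\<dots> \<le> (\<integral>\<^sup>+x. Phi_excess \<Phi> (f_n n x) \<partial>Q)"
      by (rule Phi_excess_nn_integral_le_finite[OF mono conv Q _ fin]) simp
    also have "\<dots> \<le> (\<integral>\<^sup>+x. Phi_excess \<Phi> (f x) \<partial>Q)"
      by (intro nn_integral_mono monoD[OF mono_Phi_excess[OF mono]]) (simp add: f_n_def)
    finally show "Phi_excess \<Phi> (ennreal t) \<le> (\<integral>\<^sup>+x. Phi_excess \<Phi> (f x) \<partial>Q)" .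
  qed
  finally show ?thesis unfolding top .
qed

lemma Phi_excess_average_le:
  assumes mono: "mono_on {0..} \<Phi>" and conv: "convex_on {0..} \<Phi>"
    and A: "finite A" "A \<noteq> {}"
  shows "Phi_excess \<Phi> ((\<Sum>a\<in>A. y a) / of_nat (card A)) \<le> (\<Sum>a\<in>A. Phi_excess \<Phi> (y a)) / of_nat (card A)"
proof -
  have "Phi_excess \<Phi> (\<integral>\<^sup>+a. y a \<partial>measure_pmf (pmf_of_set A))
      \<le> (\<integral>\<^sup>+a. Phi_excess \<Phi> (y a) \<partial>measure_pmf (pmf_of_set A))"
    by (rule Phi_excess_nn_integral_le[OF mono conv]) (auto simp: measure_pmf.prob_space_axioms)
  then show ?thesis using A by (simp add: nn_integral_pmf_of_set)
qed

lemma Phi_excess_sum_le: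
  assumes mono: "mono_on {0..} \<Phi>" and conv: "convex_on {0..} \<Phi>" and K: "K > 0"
  shows "Phi_excess \<Phi> (\<Sum>m<K. y m) \<le> (\<Sum>m<K. Phi_excess \<Phi> (of_nat K * y m)) / of_nat K"
proof -
  have "(\<Sum>m<K. of_nat K * y m) / of_nat K = ((\<Sum>m<K. y m) * of_nat K) / of_nat K"
    by (simp add: sum_distrib_right mult.commute[of "of_nat K"])
  also have "\<dots> = (\<Sum>m<K. y m)"
    using K by (intro ennreal_mult_divide_eq) auto
  finally have "(\<Sum>m<K. of_nat K * y m) / of_nat K = (\<Sum>m<K. y m)" .
  then show ?thesis
    using Phi_excess_average_le[OF mono conv, of "{..<K}" "\<lambda>m. of_nat K * y m"] K
    by (simp add: lessThan_empty_iff)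
qed

lemma Phi_excess_add_le:
  assumes mono: "mono_on {0..} \<Phi>" and conv: "convex_on {0..} \<Phi>"
  shows "Phi_excess \<Phi> (a + b) \<le> (Phi_excess \<Phi> (2 * a) + Phi_excess \<Phi> (2 * b)) / 2"
proof -
  define y where "y i = (if i = (0::nat) then 2 * a else 2 * b)" for i
  have "Phi_excess \<Phi> ((\<Sum>i<2. y i) / of_nat (card {..<2::nat}))
      \<le> (\<Sum>i<2. Phi_excess \<Phi> (y i)) / of_nat (card {..<2::nat})"
    by (rule Phi_excess_average_le[OF mono conv]) (auto simp: lessThan_empty_iff)
  moreover have "(\<Sum>i<2. y i) / of_nat (card {..<2::nat}) = a + b"
  proof -
    have "(\<Sum>i<2. y i) = (a + b) * 2"
      by (simp add: y_def numeral_2_eq_2 algebra_simps)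
    then show ?thesis using ennreal_mult_divide_eq[of 2 "a + b"] by simp
  qed
  moreover have "(\<Sum>i<2. Phi_excess \<Phi> (y i)) = Phi_excess \<Phi> (2 * a) + Phi_excess \<Phi> (2 * b)"
    by (simp add: y_def numeral_2_eq_2)
  ultimately show ?thesis by simp
qed

lemma ereal_add_le_average:
  fixes L :: ennreal and R :: "'e \<Rightarrow> ennreal"
  assumes A: "finite A" "card A = K" "K > 0"
    and le: "L \<le> (\<Sum>e\<in>A. R e) / of_nat K"
  shows "ereal c + enn2ereal L \<le> ereal (1 / real K) * (\<Sum>e\<in>A. ereal c + enn2ereal (R e))"
proof -
  have sum: "(\<Sum>e\<in>A. ereal c + enn2ereal (R e)) = ereal (real K * c) + enn2ereal (\<Sum>e\<in>A. R e)"
    using A by (simp add: sum.distrib sum_ereal)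
  have "ereal (1 / real K) * (ereal (real K * c) + enn2ereal S) = ereal c + enn2ereal (S / of_nat K)"
    for S :: ennreal
  proof (cases S)
    case (real r)
    then show ?thesis
      using A by (simp add: divide_ennreal ennreal_of_nat_eq_real_of_nat field_simps)
  qed (use A in \<open>simp add: ennreal_top_divide\<close>)
  moreover have "enn2ereal L \<le> enn2ereal ((\<Sum>e\<in>A. R e) / of_nat K)"
    using le by (simp add: less_eq_ennreal.rep_eq)
  ultimately show ?thesis unfolding sum by (metis add_left_mono)
qed

section \<open>Product measures and independence\<close>

definition join_copies :: "'i set \<Rightarrow> ('i \<Rightarrow> 'x) \<times> ('i \<Rightarrow> 'x) \<Rightarrow> ('i \<times> bool \<Rightarrow> 'x)" where
  "join_copies I z = (\<lambda>(c, b)\<in>I \<times> UNIV. if b then fst z c else snd z c)"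

definition split_copies :: "'i set \<Rightarrow> ('i \<times> bool \<Rightarrow> 'x) \<Rightarrow> ('i \<Rightarrow> 'x) \<times> ('i \<Rightarrow> 'x)" where
  "split_copies I x = ((\<lambda>c\<in>I. x (c, True)), (\<lambda>c\<in>I. x (c, False)))"

definition mix_copies :: "'i set \<Rightarrow> 'i set \<Rightarrow> ('i \<Rightarrow> 'x) \<times> ('i \<Rightarrow> 'x) \<Rightarrow> ('i \<Rightarrow> 'x)" where
  "mix_copies I B z = (\<lambda>c\<in>I. if c \<in> B then fst z c else snd z c)"

definition swap_copies :: "'i set \<Rightarrow> 'i set \<Rightarrow> ('i \<Rightarrow> 'x) \<times> ('i \<Rightarrow> 'x) \<Rightarrow> ('i \<Rightarrow> 'x) \<times> ('i \<Rightarrow> 'x)" where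
  "swap_copies I S z =
    ((\<lambda>c\<in>I. if c \<in> S then snd z c else fst z c), (\<lambda>c\<in>I. if c \<in> S then fst z c else snd z c))"

lemma measurable_join_copies[measurable]:
  "join_copies I \<in> (PiM I (\<lambda>_. N) \<Otimes>\<^sub>M PiM I (\<lambda>_. N)) \<rightarrow>\<^sub>M PiM (I \<times> UNIV) (\<lambda>_. N)"
  unfolding join_copies_def by (rule measurable_restrict) (auto split: prod.splits)

lemma measurable_split_copies[measurable]:
  "split_copies I \<in> PiM (I \<times> UNIV) (\<lambda>_. N) \<rightarrow>\<^sub>M (PiM I (\<lambda>_. N) \<Otimes>\<^sub>M PiM I (\<lambda>_. N))"
  unfolding split_copies_def by measurable

lemma measurable_mix_copies[measurable]:
  "mix_copies I B \<in> (PiM I (\<lambda>_. N) \<Otimes>\<^sub>M PiM I (\<lambda>_. N)) \<rightarrow>\<^sub>M PiM I (\<lambda>_. N)"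
  unfolding mix_copies_def by measurable

lemma measurable_swap_copies[measurable]:
  "swap_copies I S \<in> (PiM I (\<lambda>_. N) \<Otimes>\<^sub>M PiM I (\<lambda>_. N)) \<rightarrow>\<^sub>M (PiM I (\<lambda>_. N) \<Otimes>\<^sub>M PiM I (\<lambda>_. N))"
  unfolding swap_copies_def by measurable

lemma split_join_copies:
  "z \<in> space (PiM I (\<lambda>_. N) \<Otimes>\<^sub>M PiM I (\<lambda>_. N)) \<Longrightarrow> split_copies I (join_copies I z) = z"
  by (cases z) (auto simp: split_copies_def join_copies_def space_pair_measure space_PiM PiE_def
      extensional_def fun_eq_iff)

lemma distr_PiM_reindex_const:
  assumes "prob_space N" "inj_on f J" "f \<in> J \<rightarrow> K"
  shows "distr (PiM K (\<lambda>_. N)) (PiM J (\<lambda>_. N)) (\<lambda>\<omega>. \<lambda>n\<in>J. \<omega> (f n)) = PiM J (\<lambda>_. N)"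
  using distr_PiM_reindex[of K "\<lambda>_. N" f J] assms by simp

lemma distr_join_copies:
  fixes N :: "'x measure" and I :: "'i set"
  assumes N: "prob_space N" and I: "finite I"
  shows "distr (PiM I (\<lambda>_. N) \<Otimes>\<^sub>M PiM I (\<lambda>_. N)) (PiM (I \<times> UNIV) (\<lambda>_. N)) (join_copies I)
    = PiM (I \<times> UNIV) (\<lambda>_. N)"
proof -
  interpret N: prob_space N by fact
  interpret PS: product_sigma_finite "\<lambda>_. N" by standard
  interpret P: prob_space "PiM I (\<lambda>_. N)" by (intro prob_space_PiM N)
  interpret PP: pair_sigma_finite "PiM I (\<lambda>_. N)" "PiM I (\<lambda>_. N)" ..
  show ?thesis
  proof (rule PS.PiM_eqI)
    show "finite (I \<times> (UNIV::bool set))" using I by simp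
    fix A :: "'i \<times> bool \<Rightarrow> 'x set" assume A: "\<And>i. i \<in> I \<times> UNIV \<Longrightarrow> A i \<in> sets N"
    have pre: "join_copies I -` Pi\<^sub>E (I \<times> UNIV) A \<inter> space (PiM I (\<lambda>_. N) \<Otimes>\<^sub>M PiM I (\<lambda>_. N))
        = Pi\<^sub>E I (\<lambda>c. A (c, True)) \<times> Pi\<^sub>E I (\<lambda>c. A (c, False))"
    proof -
      have in_space: "x \<in> A (c, t) \<Longrightarrow> c \<in> I \<Longrightarrow> x \<in> space N" for x c t
        using A[of "(c, t)"] sets.sets_into_space by auto
      have "join_copies I (a, b) \<in> Pi\<^sub>E (I \<times> UNIV) A
          \<longleftrightarrow> (\<forall>c\<in>I. a c \<in> A (c, True) \<and> b c \<in> A (c, False))" for a b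
        by (auto simp: join_copies_def PiE_iff extensional_def all_bool_eq)
      then show ?thesis
        by (auto simp: space_pair_measure space_PiM PiE_iff extensional_def dest: in_space)
    qed
    have "emeasure (distr (PiM I (\<lambda>_. N) \<Otimes>\<^sub>M PiM I (\<lambda>_. N)) (PiM (I \<times> UNIV) (\<lambda>_. N))
          (join_copies I)) (Pi\<^sub>E (I \<times> UNIV) A)
        = emeasure (PiM I (\<lambda>_. N) \<Otimes>\<^sub>M PiM I (\<lambda>_. N))
            (Pi\<^sub>E I (\<lambda>c. A (c, True)) \<times> Pi\<^sub>E I (\<lambda>c. A (c, False)))"
      using A by (subst emeasure_distr) (auto simp: pre intro!: sets_PiM_I_finite I)
    also have "\<dots> = (\<Prod>c\<in>I. emeasure N (A (c, True))) * (\<Prod>c\<in>I. emeasure N (A (c, False)))"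
      using A I by (simp add: P.emeasure_pair_measure_Times PS.emeasure_PiM sets_PiM_I_finite)
    also have "\<dots> = (\<Prod>c\<in>I. \<Prod>b\<in>UNIV. emeasure N (A (c, b)))"
      by (simp add: UNIV_bool prod.distrib mult.commute)
    also have "\<dots> = (\<Prod>i\<in>I \<times> UNIV. emeasure N (A i))"
      by (rule prod.cartesian_product'[symmetric])
    finally show "emeasure (distr (PiM I (\<lambda>_. N) \<Otimes>\<^sub>M PiM I (\<lambda>_. N)) (PiM (I \<times> UNIV) (\<lambda>_. N))
        (join_copies I)) (Pi\<^sub>E (I \<times> UNIV) A) = (\<Prod>i\<in>I \<times> UNIV. emeasure N (A i))" .
  qed simp
qed

lemma nn_integral_split_copies:
  assumes N: "prob_space N" and I: "finite I"
    and h[measurable]: "h \<in> borel_measurable (PiM I (\<lambda>_. N) \<Otimes>\<^sub>M PiM I (\<lambda>_. N))"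
  shows "(\<integral>\<^sup>+z. h z \<partial>(PiM I (\<lambda>_. N) \<Otimes>\<^sub>M PiM I (\<lambda>_. N)))
       = (\<integral>\<^sup>+x. h (split_copies I x) \<partial>PiM (I \<times> UNIV) (\<lambda>_. N))"
proof -
  have "(\<integral>\<^sup>+z. h z \<partial>(PiM I (\<lambda>_. N) \<Otimes>\<^sub>M PiM I (\<lambda>_. N)))
      = (\<integral>\<^sup>+z. h (split_copies I (join_copies I z)) \<partial>(PiM I (\<lambda>_. N) \<Otimes>\<^sub>M PiM I (\<lambda>_. N)))"
    by (intro nn_integral_cong) (simp add: split_join_copies)
  also have "\<dots> = (\<integral>\<^sup>+x. h (split_copies I x) \<partial>distr (PiM I (\<lambda>_. N) \<Otimes>\<^sub>M PiM I (\<lambda>_. N))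
      (PiM (I \<times> UNIV) (\<lambda>_. N)) (join_copies I))"
    by (subst nn_integral_distr) auto
  finally show ?thesis unfolding distr_join_copies[OF N I] .
qed

lemma nn_integral_mix_copies:
  fixes N :: "'x measure" and I :: "'i set"
  assumes N: "prob_space N" and I: "finite I"
    and h[measurable]: "h \<in> borel_measurable (PiM I (\<lambda>_. N))"
  shows "(\<integral>\<^sup>+z. h (mix_copies I B z) \<partial>(PiM I (\<lambda>_. N) \<Otimes>\<^sub>M PiM I (\<lambda>_. N)))
    = (\<integral>\<^sup>+u. h u \<partial>PiM I (\<lambda>_. N))"
proof -
  define f where "f c = (c, c \<in> B)" for c
  have "(\<integral>\<^sup>+z. h (mix_copies I B z) \<partial>(PiM I (\<lambda>_. N) \<Otimes>\<^sub>M PiM I (\<lambda>_. N)))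
      = (\<integral>\<^sup>+x. h (mix_copies I B (split_copies I x)) \<partial>PiM (I \<times> UNIV) (\<lambda>_. N))"
    by (rule nn_integral_split_copies[OF N I]) measurable
  also have "\<dots> = (\<integral>\<^sup>+x. h (\<lambda>n\<in>I. x (f n)) \<partial>PiM (I \<times> UNIV) (\<lambda>_. N))"
    by (intro nn_integral_cong arg_cong[where f=h])
      (auto simp: mix_copies_def split_copies_def f_def fun_eq_iff)
  also have "\<dots> = (\<integral>\<^sup>+u. h u \<partial>distr (PiM (I \<times> UNIV) (\<lambda>_. N)) (PiM I (\<lambda>_. N)) (\<lambda>x. \<lambda>n\<in>I. x (f n)))"
    by (subst nn_integral_distr)
      (auto simp: f_def intro!: measurable_restrict measurable_component_singleton)
  also have "distr (PiM (I \<times> UNIV) (\<lambda>_. N)) (PiM I (\<lambda>_. N)) (\<lambda>x. \<lambda>n\<in>I. x (f n)) = PiM I (\<lambda>_. N)"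
    by (rule distr_PiM_reindex_const[OF N]) (auto simp: f_def inj_on_def)
  finally show ?thesis .
qed

lemma nn_integral_swap_copies:
  fixes N :: "'x measure" and I :: "'i set"
  assumes N: "prob_space N" and I: "finite I"
    and h[measurable]: "h \<in> borel_measurable (PiM I (\<lambda>_. N) \<Otimes>\<^sub>M PiM I (\<lambda>_. N))"
  shows "(\<integral>\<^sup>+z. h (swap_copies I S z) \<partial>(PiM I (\<lambda>_. N) \<Otimes>\<^sub>M PiM I (\<lambda>_. N)))
       = (\<integral>\<^sup>+z. h z \<partial>(PiM I (\<lambda>_. N) \<Otimes>\<^sub>M PiM I (\<lambda>_. N)))"
proof -
  define f where "f y = (fst y, if fst y \<in> S then \<not> snd y else snd y)" for y :: "'i \<times> bool"
  have f: "inj_on f (I \<times> UNIV)" "f \<in> I \<times> UNIV \<rightarrow> I \<times> UNIV"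
    by (auto simp: f_def inj_on_def split: if_splits)
  have "(\<integral>\<^sup>+z. h (swap_copies I S z) \<partial>(PiM I (\<lambda>_. N) \<Otimes>\<^sub>M PiM I (\<lambda>_. N)))
      = (\<integral>\<^sup>+x. h (swap_copies I S (split_copies I x)) \<partial>PiM (I \<times> UNIV) (\<lambda>_. N))"
    by (rule nn_integral_split_copies[OF N I]) measurable
  also have "\<dots> = (\<integral>\<^sup>+x. h (split_copies I (\<lambda>n\<in>I \<times> UNIV. x (f n))) \<partial>PiM (I \<times> UNIV) (\<lambda>_. N))"
    by (intro nn_integral_cong arg_cong[where f=h])
      (auto simp: swap_copies_def split_copies_def f_def fun_eq_iff)
  also have "\<dots> = (\<integral>\<^sup>+x. h (split_copies I x) \<partial>distr (PiM (I \<times> UNIV) (\<lambda>_. N))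
      (PiM (I \<times> UNIV) (\<lambda>_. N)) (\<lambda>x. \<lambda>n\<in>I \<times> UNIV. x (f n)))"
    using f(2) by (subst nn_integral_distr)
      (auto intro!: measurable_restrict measurable_component_singleton)
  also have "distr (PiM (I \<times> UNIV) (\<lambda>_. N)) (PiM (I \<times> UNIV) (\<lambda>_. N)) (\<lambda>x. \<lambda>n\<in>I \<times> UNIV. x (f n))
      = PiM (I \<times> UNIV) (\<lambda>_. N)"
    by (rule distr_PiM_reindex_const[OF N f])
  also have "(\<integral>\<^sup>+x. h (split_copies I x) \<partial>PiM (I \<times> UNIV) (\<lambda>_. N))
      = (\<integral>\<^sup>+z. h z \<partial>(PiM I (\<lambda>_. N) \<Otimes>\<^sub>M PiM I (\<lambda>_. N)))"
    by (rule nn_integral_split_copies[OF N I, symmetric]) measurable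
  finally show ?thesis .
qed

lemma distr_pair_eq_pair_measure:
  assumes M: "prob_space M" and X[measurable]: "X \<in> M \<rightarrow>\<^sub>M N1" and Y[measurable]: "Y \<in> M \<rightarrow>\<^sub>M N2"
    and indep: "\<And>A B. A \<in> sets N1 \<Longrightarrow> B \<in> sets N2 \<Longrightarrow>
      measure M {\<omega> \<in> space M. X \<omega> \<in> A \<and> Y \<omega> \<in> B}
        = measure M {\<omega> \<in> space M. X \<omega> \<in> A} * measure M {\<omega> \<in> space M. Y \<omega> \<in> B}"
  shows "distr M (N1 \<Otimes>\<^sub>M N2) (\<lambda>\<omega>. (X \<omega>, Y \<omega>)) = distr M N1 X \<Otimes>\<^sub>M distr M N2 Y"
proof (rule pair_measure_eqI[symmetric])
  interpret prob_space M by fact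
  interpret X: prob_space "distr M N1 X" by (rule prob_space_distr) fact
  interpret Y: prob_space "distr M N2 Y" by (rule prob_space_distr) fact
  show "sigma_finite_measure (distr M N1 X)" "sigma_finite_measure (distr M N2 Y)"
    by unfold_locales
  fix A B assume A: "A \<in> sets (distr M N1 X)" and B: "B \<in> sets (distr M N2 Y)"
  have "{\<omega> \<in> space M. X \<omega> \<in> A \<and> Y \<omega> \<in> B} = (\<lambda>\<omega>. (X \<omega>, Y \<omega>)) -` (A \<times> B) \<inter> space M" by auto
  then show "emeasure (distr M N1 X) A * emeasure (distr M N2 Y) B
      = emeasure (distr M (N1 \<Otimes>\<^sub>M N2) (\<lambda>\<omega>. (X \<omega>, Y \<omega>))) (A \<times> B)"
    using A B indep[of A B]
    by (simp add: emeasure_distr emeasure_eq_measure vimage_def Int_def conj_commute ennreal_mult)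
qed simp

section \<open>Suprema over pointwise dense classes and telescoping sums\<close>

lemma SUP_eq_SUP_pointwise_dense:
  assumes G0: "G0 \<subseteq> G" "\<forall>g\<in>G. \<exists>s. (\<forall>n. s n \<in> G0) \<and> (\<forall>x. (\<lambda>n. s n x) \<longlonglongrightarrow> g x)"
    and cont: "\<And>h s. (\<forall>x. (\<lambda>n. s n x) \<longlonglongrightarrow> h x) \<Longrightarrow> (\<lambda>n. \<Delta> (s n)) \<longlonglongrightarrow> \<Delta> h"
  shows "(SUP g\<in>G. ennreal \<bar>\<Delta> g\<bar>) = (SUP g\<in>G0. ennreal \<bar>\<Delta> g\<bar>)"
proof (rule antisym)
  show "(SUP g\<in>G0. ennreal \<bar>\<Delta> g\<bar>) \<le> (SUP g\<in>G. ennreal \<bar>\<Delta> g\<bar>)"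
    using G0(1) by (rule SUP_subset_mono) simp
  show "(SUP g\<in>G. ennreal \<bar>\<Delta> g\<bar>) \<le> (SUP g\<in>G0. ennreal \<bar>\<Delta> g\<bar>)"
  proof (rule SUP_least)
    fix g assume "g \<in> G"
    then obtain s where s: "\<forall>n. s n \<in> G0" "\<forall>x. (\<lambda>n. s n x) \<longlonglongrightarrow> g x" using G0(2) by blast
    have "(\<lambda>n. ennreal \<bar>\<Delta> (s n)\<bar>) \<longlonglongrightarrow> ennreal \<bar>\<Delta> g\<bar>"
      by (intro tendsto_ennrealI tendsto_rabs cont s(2))
    then show "ennreal \<bar>\<Delta> g\<bar> \<le> (SUP g\<in>G0. ennreal \<bar>\<Delta> g\<bar>)"
      by (rule LIMSEQ_le_const2) (use s(1) in \<open>auto intro!: exI[of _ 0] SUP_upper\<close>)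
  qed
qed

lemma abs_deviation_le_sum_increments:
  fixes f :: "nat \<Rightarrow> 'x \<Rightarrow> real"
  assumes Q: "prob_space Q" and f[measurable]: "\<And>m. f m \<in> borel_measurable Q"
    and f0: "integrable Q (f 0)" and fK: "\<And>x. x \<in> space Q \<Longrightarrow> f K x = b"
  shows "ennreal \<bar>b - (\<integral>x. f 0 x \<partial>Q)\<bar> \<le> (\<Sum>m<K. \<integral>\<^sup>+x. ennreal \<bar>f (Suc m) x - f m x\<bar> \<partial>Q)"
proof (cases "\<exists>m<K. (\<integral>\<^sup>+x. ennreal \<bar>f (Suc m) x - f m x\<bar> \<partial>Q) = \<top>")
  case True
  then obtain m where "m < K" "(\<integral>\<^sup>+x. ennreal \<bar>f (Suc m) x - f m x\<bar> \<partial>Q) = \<top>" by blast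
  then have "(\<Sum>m<K. \<integral>\<^sup>+x. ennreal \<bar>f (Suc m) x - f m x\<bar> \<partial>Q) = \<top>"
    by (subst ennreal_sum_eq_top) auto
  then show ?thesis by (metis top_greatest)
next
  case False
  interpret prob_space Q by fact
  have d: "integrable Q (\<lambda>x. f (Suc m) x - f m x)" if "m < K" for m
    using False that by (intro integrableI_bounded) (auto simp: less_top)
  have fi: "m \<le> K \<Longrightarrow> integrable Q (f m)" for m
  proof (induction m)
    case (Suc m)
    then have mK: "m < K" "m \<le> K" by auto
    have "integrable Q (\<lambda>x. (f (Suc m) x - f m x) + f m x)"
      by (rule Bochner_Integration.integrable_add[OF d[OF mK(1)] Suc.IH[OF mK(2)]])
    then show ?case by simp
  qed (simp add: f0)
  have "(\<integral>x. f K x \<partial>Q) = (\<integral>x. b \<partial>Q)"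
    using fK by (intro Bochner_Integration.integral_cong) auto
  then have "b = (\<integral>x. f K x \<partial>Q)" by (simp add: prob_space)
  then have "b - (\<integral>x. f 0 x \<partial>Q) = (\<integral>x. f K x - f 0 x \<partial>Q)"
    using fi[of K] fi[of 0] by simp
  also have "\<dots> = (\<integral>x. (\<Sum>m<K. f (Suc m) x - f m x) \<partial>Q)"
    by (simp only: sum_lessThan_telescope[of "\<lambda>m. f m _"])
  also have "\<dots> = (\<Sum>m<K. \<integral>x. f (Suc m) x - f m x \<partial>Q)"
    using d by (intro Bochner_Integration.integral_sum) auto
  finally have eq: "b - (\<integral>x. f 0 x \<partial>Q) = (\<Sum>m<K. \<integral>x. f (Suc m) x - f m x \<partial>Q)" .
  have "ennreal \<bar>b - (\<integral>x. f 0 x \<partial>Q)\<bar> \<le> ennreal (\<Sum>m<K. \<bar>\<integral>x. f (Suc m) x - f m x \<partial>Q\<bar>)"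
    unfolding eq by (intro ennreal_leI sum_abs)
  also have "\<dots> = (\<Sum>m<K. ennreal \<bar>\<integral>x. f (Suc m) x - f m x \<partial>Q\<bar>)"
    by simp
  also have "\<dots> \<le> (\<Sum>m<K. \<integral>\<^sup>+x. ennreal \<bar>f (Suc m) x - f m x\<bar> \<partial>Q)"
    using integral_norm_bound_ennreal[OF d] by (intro sum_mono) auto
  finally show ?thesis .
qed

section \<open>The symmetrization argument\<close>

locale symmetrization =
  fixes M :: "'a measure"
    and Z :: "('k::finite \<Rightarrow> nat) \<Rightarrow> 'a \<Rightarrow> 'b::polish_space"
    and U :: "('k \<Rightarrow> nat) \<Rightarrow> 'a \<Rightarrow> real"
    and \<tau> :: "(('k \<Rightarrow> nat) \<Rightarrow> real) \<Rightarrow> 'b"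
    and \<epsilon> :: "('k \<Rightarrow> nat) \<Rightarrow> 'a \<Rightarrow> real"
    and G :: "('b \<Rightarrow> real) set"
    and \<Phi> :: "real \<Rightarrow> real"
    and C :: "'k \<Rightarrow> nat"
  assumes M: "prob_space M"
    and Z_meas: "\<And>j. (\<forall>i. 1 \<le> j i) \<Longrightarrow> Z j \<in> measurable M borel"
    and U_meas: "\<And>c. c \<noteq> (\<lambda>_. 0) \<Longrightarrow> U c \<in> borel_measurable M"
    and U_unif: "\<And>c. c \<noteq> (\<lambda>_. 0) \<Longrightarrow> distr M borel (U c) = uniform_measure lborel {0..1}"
    and U_indep: "prob_space.indep_vars M (\<lambda>_. borel) U {c. c \<noteq> (\<lambda>_. 0)}"
    and \<tau>_meas: "\<tau> \<in> measurable
        (Pi\<^sub>M {e. (\<forall>i. e i \<le> 1) \<and> e \<noteq> (\<lambda>_. 0)} (\<lambda>_. borel)) borel"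
    and Z_repr: "AE \<omega> in M. \<forall>j. (\<forall>i. 1 \<le> j i) \<longrightarrow>
        Z j \<omega> = \<tau> (restrict (\<lambda>e. U (odot j e) \<omega>) {e. (\<forall>i. e i \<le> 1) \<and> e \<noteq> (\<lambda>_. 0)})"
    and G_pm: "pointwise_measurable G"
    and G_meas: "\<And>g. g \<in> G \<Longrightarrow> g \<in> borel_measurable borel"
    and G_int: "\<And>g. g \<in> G \<Longrightarrow> integrable M (\<lambda>\<omega>. g (Z (\<lambda>_. 1) \<omega>))"
    and \<Phi>_mono: "mono_on {0..} \<Phi>"
    and \<Phi>_convex: "convex_on {0..} \<Phi>"
    and \<epsilon>_meas: "\<And>c. \<epsilon> c \<in> borel_measurable M"
    and \<epsilon>_rad: "\<And>c. measure M {\<omega> \<in> space M. \<epsilon> c \<omega> = 1} = 1/2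
                 \<and> measure M {\<omega> \<in> space M. \<epsilon> c \<omega> = -1} = 1/2"
    and \<epsilon>_Z_indep: "\<And>A B. A \<in> sets (Pi\<^sub>M UNIV (\<lambda>_. (borel :: real measure))) \<Longrightarrow>
        B \<in> sets (Pi\<^sub>M {j. \<forall>i. 1 \<le> j i} (\<lambda>_. (borel :: 'b measure))) \<Longrightarrow>
        measure M {\<omega> \<in> space M. (\<lambda>c. \<epsilon> c \<omega>) \<in> A \<and>
                      restrict (\<lambda>j. Z j \<omega>) {j. \<forall>i. 1 \<le> j i} \<in> B}
        = measure M {\<omega> \<in> space M. (\<lambda>c. \<epsilon> c \<omega>) \<in> A}
          * measure M {\<omega> \<in> space M. restrict (\<lambda>j. Z j \<omega>) {j. \<forall>i. 1 \<le> j i} \<in> B}"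
    and C_pos: "\<forall>i. 1 \<le> C i"
begin

definition patterns :: "('k \<Rightarrow> nat) set" where
  "patterns = {e. (\<forall>i. e i \<le> 1) \<and> e \<noteq> (\<lambda>_. 0)}"

definition box :: "('k \<Rightarrow> nat) set" where
  "box = {j. \<forall>i. 1 \<le> j i \<and> j i \<le> C i}"

definition pos_idx :: "('k \<Rightarrow> nat) set" where
  "pos_idx = {j. \<forall>i. 1 \<le> j i}"

definition U_idx :: "('k \<Rightarrow> nat) set" where
  "U_idx = {c. (\<forall>i. c i \<le> C i) \<and> c \<noteq> (\<lambda>_. 0)}"

definition pattern :: "('k \<Rightarrow> nat) \<Rightarrow> 'k \<Rightarrow> nat" where
  "pattern c = (\<lambda>i. if c i = 0 then 0 else 1)"

definition enum :: "('k \<Rightarrow> nat) list" where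
  "enum = (SOME l. set l = patterns \<and> distinct l)"

definition K :: nat where
  "K = length enum"

definition vol :: real where
  "vol = real (prod C UNIV)"

lemma finite_patterns: "finite patterns"
proof -
  have "patterns \<subseteq> PiE UNIV (\<lambda>_. {0..1})" by (auto simp: patterns_def PiE_def)
  then show ?thesis by (rule finite_subset) (simp add: finite_PiE)
qed

lemma card_patterns: "card patterns = 2 ^ CARD('k) - 1"
proof -
  have eq: "patterns = PiE UNIV (\<lambda>_. {0..1::nat}) - {\<lambda>_. 0}" by (auto simp: patterns_def PiE_def)
  have "card (PiE UNIV (\<lambda>_. {0..1::nat}) :: ('k \<Rightarrow> nat) set) = 2 ^ CARD('k)"
    by (simp add: card_PiE numeral_2_eq_2)
  then show ?thesis unfolding eq by (subst card_Diff_singleton) (auto simp: finite_PiE)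
qed

lemma finite_U_idx: "finite U_idx"
proof -
  have "U_idx \<subseteq> PiE UNIV (\<lambda>i. {0..C i})" by (auto simp: U_idx_def PiE_def)
  then show ?thesis by (rule finite_subset) (simp add: finite_PiE)
qed

lemma box_eq_PiE: "box = PiE UNIV (\<lambda>i. {1..C i})"
  by (auto simp: box_def PiE_def)

lemma finite_box: "finite box"
  by (simp add: box_eq_PiE finite_PiE)

lemma card_box: "real (card box) = vol"
  by (simp add: box_eq_PiE card_PiE vol_def)

lemma vol_pos: "vol > 0"
  using C_pos by (simp add: vol_def prod_pos Suc_le_eq)

lemma one_in_box: "(\<lambda>_. 1) \<in> box"
  using C_pos by (simp add: box_def)

lemma box_subset_pos_idx: "box \<subseteq> pos_idx"
  by (auto simp: box_def pos_idx_def)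

lemma set_enum: "set enum = patterns" and distinct_enum: "distinct enum"
proof -
  have "\<exists>l. set l = patterns \<and> distinct l" using finite_patterns finite_distinct_list by blast
  then have "set enum = patterns \<and> distinct enum" unfolding enum_def by (rule someI_ex)
  then show "set enum = patterns" "distinct enum" by auto
qed

lemma K_eq_card: "K = card patterns"
  using set_enum distinct_enum distinct_card by (fastforce simp: K_def)

lemma K_pos: "K > 0"
proof -
  have "(\<lambda>_. 1) \<in> patterns" by (simp add: patterns_def fun_eq_iff)
  then show ?thesis using finite_patterns by (auto simp: K_eq_card card_gt_0_iff)
qed

lemma real_K: "real K = 2 ^ CARD('k) - 1"
  by (simp add: K_eq_card card_patterns of_nat_diff)

lemma enum_nth_in_patterns: "m < K \<Longrightarrow> enum ! m \<in> patterns"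
  by (metis K_def nth_mem set_enum)

lemma set_take_Suc_enum: "m < K \<Longrightarrow> set (take (Suc m) enum) = insert (enum ! m) (set (take m enum))"
  by (simp add: take_Suc_conv_app_nth K_def)

lemma enum_nth_notin_take: "m < K \<Longrightarrow> enum ! m \<notin> set (take m enum)"
  using distinct_enum by (auto simp: K_def in_set_conv_nth nth_eq_iff_index_eq)

lemma odot_in_U_idx:
  assumes j: "j \<in> box" and e: "e \<in> patterns"
  shows "odot j e \<in> U_idx"
proof -
  have "j i * e i \<le> C i" for i
    using j e mult_le_mono[of "j i" "C i" "e i" 1] by (auto simp: box_def patterns_def)
  moreover obtain i where "e i \<noteq> 0" using e by (auto simp: patterns_def fun_eq_iff)
  moreover have "j i \<noteq> 0" using j by (auto simp: box_def Suc_le_eq)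
  ultimately show ?thesis by (auto simp: U_idx_def odot_def fun_eq_iff)
qed

lemma pattern_odot:
  assumes "j \<in> pos_idx" and "e \<in> patterns"
  shows "pattern (odot j e) = e"
proof
  fix i
  have "j i \<noteq> 0" using assms(1) by (auto simp: pos_idx_def Suc_le_eq)
  moreover have "e i = 0 \<or> e i = 1" using assms(2) by (auto simp: patterns_def le_Suc_eq)
  ultimately show "pattern (odot j e) i = e i" by (auto simp: pattern_def odot_def)
qed

lemma inj_on_odot: "j \<in> pos_idx \<Longrightarrow> inj_on (odot j) patterns"
  by (metis inj_onI pattern_odot)

lemma pattern_in_patterns: "c \<in> U_idx \<Longrightarrow> pattern c \<in> patterns"
  by (auto simp: pattern_def U_idx_def patterns_def fun_eq_iff)

definition unif01 :: "real measure" where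
  "unif01 = uniform_measure lborel {0..1}"

definition PU :: "(('k \<Rightarrow> nat) \<Rightarrow> real) measure" where
  "PU = PiM U_idx (\<lambda>_. unif01)"

definition PU2 :: "((('k \<Rightarrow> nat) \<Rightarrow> real) \<times> (('k \<Rightarrow> nat) \<Rightarrow> real)) measure" where
  "PU2 = PU \<Otimes>\<^sub>M PU"

definition U_vec :: "'a \<Rightarrow> ('k \<Rightarrow> nat) \<Rightarrow> real" where
  "U_vec \<omega> = restrict (\<lambda>c. U c \<omega>) U_idx"

definition Z_of :: "('k \<Rightarrow> nat) \<Rightarrow> (('k \<Rightarrow> nat) \<Rightarrow> real) \<Rightarrow> 'b" where
  "Z_of j u = \<tau> (restrict (\<lambda>e. u (odot j e)) patterns)"

lemma Z_of_cong: "(\<And>e. e \<in> patterns \<Longrightarrow> u (odot j e) = u' (odot j e)) \<Longrightarrow> Z_of j u = Z_of j u'"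
  unfolding Z_of_def by (intro arg_cong[where f=\<tau>]) (auto simp: restrict_def)

lemma prob_space_unif01: "prob_space unif01"
  unfolding unif01_def by (rule prob_space_uniform_measure) auto

lemma sets_unif01[measurable_cong]: "sets unif01 = sets borel"
  by (simp add: unif01_def)

lemma sets_PiM_unif01: "sets (PiM A (\<lambda>_. unif01)) = sets (PiM A (\<lambda>_. borel))"
  by (rule sets_PiM_cong) (simp_all add: sets_unif01)

lemma prob_space_PU: "prob_space PU"
  unfolding PU_def by (intro prob_space_PiM prob_space_unif01)

lemma space_PU: "space PU = PiE U_idx (\<lambda>_. UNIV)"
  by (simp add: PU_def space_PiM unif01_def)

lemma measurable_PU_component[measurable]: "c \<in> U_idx \<Longrightarrow> (\<lambda>u. u c) \<in> PU \<rightarrow>\<^sub>M borel"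
  unfolding PU_def by measurable

lemma measurable_Z_of_args:
  "j \<in> box \<Longrightarrow> (\<lambda>u. restrict (\<lambda>e. u (odot j e)) patterns) \<in> PU \<rightarrow>\<^sub>M PiM patterns (\<lambda>_. unif01)"
  unfolding measurable_cong_sets[OF refl sets_PiM_unif01]
  by (intro measurable_restrict measurable_PU_component odot_in_U_idx)

lemma measurable_tau: "\<tau> \<in> PiM patterns (\<lambda>_. unif01) \<rightarrow>\<^sub>M borel"
  using \<tau>_meas unfolding measurable_cong_sets[OF sets_PiM_unif01 refl] patterns_def .

lemma measurable_Z_of[measurable]: "j \<in> box \<Longrightarrow> Z_of j \<in> PU \<rightarrow>\<^sub>M borel"
  unfolding Z_of_def using measurable_comp[OF measurable_Z_of_args measurable_tau] by (simp add: comp_def)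

lemma measurable_Z_one[measurable]: "Z (\<lambda>_. 1) \<in> borel_measurable M"
  by (rule Z_meas) simp

lemma measurable_U_vec[measurable]: "U_vec \<in> M \<rightarrow>\<^sub>M PU"
  unfolding U_vec_def PU_def measurable_cong_sets[OF refl sets_PiM_unif01]
  by (intro measurable_restrict U_meas) (auto simp: U_idx_def)

lemma distr_U_vec: "distr M PU U_vec = PU"
proof -
  interpret prob_space M by (rule M)
  have "(\<lambda>_. 1) \<in> U_idx" using C_pos by (auto simp: U_idx_def fun_eq_iff)
  moreover have "indep_vars (\<lambda>_. borel) U U_idx"
    by (rule indep_vars_subset[OF U_indep]) (auto simp: U_idx_def)
  ultimately have "distr M (PiM U_idx (\<lambda>_. borel)) (\<lambda>x. \<lambda>c\<in>U_idx. U c x)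
      = PiM U_idx (\<lambda>c. distr M borel (U c))"
    using indep_vars_iff_distr_eq_PiM'[where I=U_idx and X=U and M'="\<lambda>_. borel"] U_meas by (auto simp: U_idx_def)
  also have "\<dots> = PU"
    unfolding PU_def unif01_def by (rule PiM_cong) (auto simp: U_idx_def U_unif)
  also have "distr M (PiM U_idx (\<lambda>_. borel)) (\<lambda>x. \<lambda>c\<in>U_idx. U c x) = distr M PU U_vec"
    by (rule distr_cong) (auto simp: PU_def sets_PiM_unif01 U_vec_def)
  finally show ?thesis .
qed

lemma AE_Z_eq_Z_of: "AE \<omega> in M. \<forall>j\<in>box. Z j \<omega> = Z_of j (U_vec \<omega>)"
  using Z_repr
proof (rule eventually_mono)
  fix \<omega> assume "\<forall>j. (\<forall>i. 1 \<le> j i) \<longrightarrow>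
      Z j \<omega> = \<tau> (restrict (\<lambda>e. U (odot j e) \<omega>) {e. (\<forall>i. e i \<le> 1) \<and> e \<noteq> (\<lambda>_. 0)})"
  then have "Z j \<omega> = \<tau> (restrict (\<lambda>e. U (odot j e) \<omega>) patterns)" if "j \<in> box" for j
    using that by (auto simp: box_def patterns_def)
  moreover have "\<tau> (restrict (\<lambda>e. U (odot j e) \<omega>) patterns) = Z_of j (U_vec \<omega>)" if "j \<in> box" for j
    unfolding Z_of_def U_vec_def using odot_in_U_idx[OF that]
    by (intro arg_cong[where f=\<tau>]) (auto simp: restrict_def fun_eq_iff)
  ultimately show "\<forall>j\<in>box. Z j \<omega> = Z_of j (U_vec \<omega>)" by simp
qed

lemma distr_Z_of: "j \<in> box \<Longrightarrow> distr PU borel (Z_of j) = distr M borel (Z (\<lambda>_. 1))"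
proof -
  have args: "distr PU borel (Z_of j) = distr (PiM patterns (\<lambda>_. unif01)) borel \<tau>" if j: "j \<in> box" for j
  proof -
    have "distr PU (PiM patterns (\<lambda>_. unif01)) (\<lambda>u. restrict (\<lambda>e. u (odot j e)) patterns)
        = PiM patterns (\<lambda>_. unif01)"
      unfolding PU_def using inj_on_odot box_subset_pos_idx odot_in_U_idx[OF j] j
      by (intro distr_PiM_reindex_const prob_space_unif01) (auto simp: restrict_def)
    then show ?thesis
      using distr_distr[OF measurable_tau measurable_Z_of_args[OF j]] by (simp add: Z_of_def[abs_def] comp_def)
  qed
  have "distr M borel (Z (\<lambda>_. 1)) = distr M borel (\<lambda>\<omega>. Z_of (\<lambda>_. 1) (U_vec \<omega>))"
    using AE_Z_eq_Z_of one_in_box measurable_Z_one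
    by (intro distr_cong_AE) (auto elim!: eventually_mono)
  also have "\<dots> = distr PU borel (Z_of (\<lambda>_. 1))"
    using distr_distr[OF measurable_Z_of[OF one_in_box] measurable_U_vec] distr_U_vec
    by (simp add: comp_def)
  finally show "j \<in> box \<Longrightarrow> distr PU borel (Z_of j) = distr M borel (Z (\<lambda>_. 1))"
    using args one_in_box by simp
qed

definition avg :: "('b \<Rightarrow> real) \<Rightarrow> (('k \<Rightarrow> nat) \<Rightarrow> real) \<Rightarrow> real" where
  "avg g u = (1 / vol) * (\<Sum>j\<in>box. g (Z_of j u))"

definition mean :: "('b \<Rightarrow> real) \<Rightarrow> real" where
  "mean g = (\<integral>\<omega>. g (Z (\<lambda>_. 1) \<omega>) \<partial>M)"

definition hybrid ::
    "nat \<Rightarrow> (('k \<Rightarrow> nat) \<Rightarrow> real) \<times> (('k \<Rightarrow> nat) \<Rightarrow> real) \<Rightarrow> ('k \<Rightarrow> nat) \<Rightarrow> real" where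
  "hybrid m z = mix_copies U_idx {c. pattern c \<in> set (take m enum)} z"

definition incr_sup :: "nat \<Rightarrow> (('k \<Rightarrow> nat) \<Rightarrow> real) \<times> (('k \<Rightarrow> nat) \<Rightarrow> real) \<Rightarrow> ennreal" where
  "incr_sup m z = (SUP g\<in>G. ennreal \<bar>avg g (hybrid (Suc m) z) - avg g (hybrid m z)\<bar>)"

lemma measurable_g_Z_of[measurable]: "g \<in> G \<Longrightarrow> j \<in> box \<Longrightarrow> (\<lambda>u. g (Z_of j u)) \<in> borel_measurable PU"
  using measurable_comp[OF measurable_Z_of G_meas] by (simp add: comp_def)

lemma measurable_avg[measurable]: "g \<in> G \<Longrightarrow> avg g \<in> borel_measurable PU"
  unfolding avg_def using finite_box by measurable

lemma measurable_hybrid[measurable]: "hybrid m \<in> PU2 \<rightarrow>\<^sub>M PU"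
  unfolding hybrid_def PU2_def PU_def by (rule measurable_mix_copies)

lemma integrable_g_Z_of:
  assumes g: "g \<in> G" and j: "j \<in> box"
  shows "integrable PU (\<lambda>u. g (Z_of j u))"
proof -
  have [measurable]: "g \<in> borel_measurable borel" using G_meas[OF g] .
  have "integrable (distr M borel (Z (\<lambda>_. 1))) g"
    using G_int[OF g] by (subst integrable_distr_eq[OF measurable_Z_one]) auto
  then show ?thesis
    unfolding distr_Z_of[OF j, symmetric] using j by (subst (asm) integrable_distr_eq) auto
qed

lemma integral_g_Z_of:
  assumes g: "g \<in> G" and j: "j \<in> box"
  shows "(\<integral>u. g (Z_of j u) \<partial>PU) = mean g"
proof -
  have [measurable]: "g \<in> borel_measurable borel" using G_meas[OF g] .
  have "(\<integral>u. g (Z_of j u) \<partial>PU) = (\<integral>x. g x \<partial>distr PU borel (Z_of j))"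
    using j by (subst integral_distr) auto
  also have "\<dots> = mean g"
    unfolding distr_Z_of[OF j] mean_def by (subst integral_distr[OF measurable_Z_one]) auto
  finally show ?thesis .
qed

lemma integrable_avg: "g \<in> G \<Longrightarrow> integrable PU (avg g)"
  unfolding avg_def using integrable_g_Z_of by (intro integrable_mult_right integrable_sum) auto

lemma integral_avg:
  assumes g: "g \<in> G"
  shows "(\<integral>u. avg g u \<partial>PU) = mean g"
proof -
  have "(\<integral>u. avg g u \<partial>PU) = (1 / vol) * (\<Sum>j\<in>box. \<integral>u. g (Z_of j u) \<partial>PU)"
    unfolding avg_def using integrable_g_Z_of[OF g] by (simp add: Bochner_Integration.integral_sum)
  also have "\<dots> = mean g"
    using vol_pos by (simp add: integral_g_Z_of[OF g] card_box)
  finally show ?thesis .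
qed

lemma hybrid_apply:
  "c \<in> U_idx \<Longrightarrow> hybrid n z c = (if pattern c \<in> set (take n enum) then fst z c else snd z c)"
  by (simp add: hybrid_def mix_copies_def)

lemma hybrid_0: "u' \<in> space PU \<Longrightarrow> hybrid 0 (u, u') = u'"
  by (auto simp: hybrid_def mix_copies_def space_PU PiE_def extensional_def fun_eq_iff)

lemma hybrid_K: "u \<in> space PU \<Longrightarrow> hybrid K (u, u') = u"
  using pattern_in_patterns
  by (auto simp: hybrid_def mix_copies_def K_def set_enum space_PU PiE_def extensional_def fun_eq_iff)

lemma deviation_le_sum_incr_sup:
  assumes u: "u \<in> space PU"
  shows "(SUP g\<in>G. ennreal \<bar>avg g u - mean g\<bar>) \<le> (\<Sum>m<K. \<integral>\<^sup>+u'. incr_sup m (u, u') \<partial>PU)"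
proof (rule SUP_least)
  fix g assume g: "g \<in> G"
  define f where "f m u' = avg g (hybrid m (u, u'))" for m u'
  have [measurable]: "(\<lambda>u'. (u, u')) \<in> PU \<rightarrow>\<^sub>M PU2"
    unfolding PU2_def using u by (rule measurable_Pair1')
  have f_meas[measurable]: "f m \<in> borel_measurable PU" for m
    unfolding f_def using g by measurable
  have f0: "f 0 u' = avg g u'" if "u' \<in> space PU" for u'
    using that by (simp add: f_def hybrid_0)
  have int0: "integrable PU (f 0)"
    using integrable_avg[OF g] f0 by (subst Bochner_Integration.integrable_cong) auto
  have mean0: "(\<integral>u'. f 0 u' \<partial>PU) = mean g"
    using integral_avg[OF g] f0 by (subst Bochner_Integration.integral_cong) auto
  have "ennreal \<bar>avg g u - (\<integral>u'. f 0 u' \<partial>PU)\<bar>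
      \<le> (\<Sum>m<K. \<integral>\<^sup>+u'. ennreal \<bar>f (Suc m) u' - f m u'\<bar> \<partial>PU)"
    by (rule abs_deviation_le_sum_increments[where f=f, OF prob_space_PU f_meas int0])
      (simp add: f_def hybrid_K[OF u])
  also have "\<dots> \<le> (\<Sum>m<K. \<integral>\<^sup>+u'. incr_sup m (u, u') \<partial>PU)"
    unfolding f_def incr_sup_def using g by (intro sum_mono nn_integral_mono SUP_upper2[OF g]) auto
  finally show "ennreal \<bar>avg g u - mean g\<bar> \<le> (\<Sum>m<K. \<integral>\<^sup>+u'. incr_sup m (u, u') \<partial>PU)"
    unfolding mean0 .
qed

subsection \<open>Reduction to a countable class\<close>

definition G0 :: "('b \<Rightarrow> real) set" where
  "G0 = (SOME G0. G0 \<subseteq> G \<and> countable G0 \<and>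
     (\<forall>g\<in>G. \<exists>s. (\<forall>n. s n \<in> G0) \<and> (\<forall>x. (\<lambda>n. s n x) \<longlonglongrightarrow> g x)))"

definition rad_sup :: "('k \<Rightarrow> nat) \<Rightarrow> (('k \<Rightarrow> nat) \<Rightarrow> real) \<Rightarrow> (('k \<Rightarrow> nat) \<Rightarrow> 'b) \<Rightarrow> ennreal" where
  "rad_sup e s z = (SUP g\<in>G. ennreal \<bar>(1 / vol) * (\<Sum>j\<in>box. s (odot j e) * g (z j))\<bar>)"

lemma G0_subset: "G0 \<subseteq> G"
  and countable_G0: "countable G0"
  and pointwise_dense_G0: "\<forall>g\<in>G. \<exists>s. (\<forall>n. s n \<in> G0) \<and> (\<forall>x. (\<lambda>n. s n x) \<longlonglongrightarrow> g x)"
proof -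
  have "\<exists>G0. G0 \<subseteq> G \<and> countable G0 \<and> (\<forall>g\<in>G. \<exists>s. (\<forall>n. s n \<in> G0) \<and> (\<forall>x. (\<lambda>n. s n x) \<longlonglongrightarrow> g x))"
    using G_pm unfolding pointwise_measurable_def by blast
  then have "G0 \<subseteq> G \<and> countable G0 \<and> (\<forall>g\<in>G. \<exists>s. (\<forall>n. s n \<in> G0) \<and> (\<forall>x. (\<lambda>n. s n x) \<longlonglongrightarrow> g x))"
    unfolding G0_def by (rule someI_ex)
  then show "G0 \<subseteq> G" "countable G0" "\<forall>g\<in>G. \<exists>s. (\<forall>n. s n \<in> G0) \<and> (\<forall>x. (\<lambda>n. s n x) \<longlonglongrightarrow> g x)"
    by auto
qed

lemma measurable_G0[measurable]: "g \<in> G0 \<Longrightarrow> g \<in> borel_measurable borel"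
  using G0_subset G_meas by auto

lemma SUP_G_eq_SUP_G0:
  assumes "\<And>h s. (\<forall>x. (\<lambda>n. s n x) \<longlonglongrightarrow> h x) \<Longrightarrow> (\<lambda>n. \<Delta> (s n)) \<longlonglongrightarrow> \<Delta> h"
  shows "(SUP g\<in>G. ennreal \<bar>\<Delta> g\<bar>) = (SUP g\<in>G0. ennreal \<bar>\<Delta> g\<bar>)"
  by (rule SUP_eq_SUP_pointwise_dense[OF G0_subset pointwise_dense_G0 assms])

lemma incr_sup_eq_SUP_G0:
  "incr_sup m z = (SUP g\<in>G0. ennreal \<bar>avg g (hybrid (Suc m) z) - avg g (hybrid m z)\<bar>)"
  unfolding incr_sup_def avg_def by (rule SUP_G_eq_SUP_G0) (intro tendsto_intros, auto)

lemma rad_sup_eq_SUP_G0: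
  "rad_sup e s z = (SUP g\<in>G0. ennreal \<bar>(1 / vol) * (\<Sum>j\<in>box. s (odot j e) * g (z j))\<bar>)"
  unfolding rad_sup_def by (rule SUP_G_eq_SUP_G0) (intro tendsto_intros, auto)

lemma measurable_incr_sup[measurable]: "incr_sup m \<in> borel_measurable PU2"
  unfolding incr_sup_eq_SUP_G0[abs_def] avg_def
  using countable_G0 finite_box G0_subset by measurable

lemma measurable_rad_sup[measurable]:
  "(\<lambda>(s, z). rad_sup e s z) \<in> borel_measurable (PiM UNIV (\<lambda>_. borel) \<Otimes>\<^sub>M PiM pos_idx (\<lambda>_. borel))"
proof -
  have [measurable]: "j \<in> box \<Longrightarrow> (\<lambda>z. z j) \<in> PiM pos_idx (\<lambda>_. borel :: 'b measure) \<rightarrow>\<^sub>M borel" for j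
    using box_subset_pos_idx by (intro measurable_component_singleton) auto
  show ?thesis
    unfolding rad_sup_eq_SUP_G0 case_prod_beta using countable_G0 finite_box by measurable
qed

lemma measurable_rad_sup_Z_of[measurable]: "(\<lambda>u. rad_sup e s (\<lambda>j. Z_of j u)) \<in> borel_measurable PU"
  unfolding rad_sup_eq_SUP_G0 using countable_G0 finite_box G0_subset by measurable

lemma Phi_excess_deviation_le:
  assumes u: "u \<in> space PU"
  shows "Phi_excess \<Phi> (SUP g\<in>G. ennreal \<bar>avg g u - mean g\<bar>)
    \<le> (\<Sum>m<K. \<integral>\<^sup>+u'. Phi_excess \<Phi> (of_nat K * incr_sup m (u, u')) \<partial>PU) / of_nat K"
proof -
  have [measurable]: "(\<lambda>u'. (u, u')) \<in> PU \<rightarrow>\<^sub>M PU2"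
    unfolding PU2_def using u by (rule measurable_Pair1')
  have "Phi_excess \<Phi> (SUP g\<in>G. ennreal \<bar>avg g u - mean g\<bar>)
      \<le> Phi_excess \<Phi> (\<Sum>m<K. \<integral>\<^sup>+u'. incr_sup m (u, u') \<partial>PU)"
    using deviation_le_sum_incr_sup[OF u] by (rule monoD[OF mono_Phi_excess[OF \<Phi>_mono]])
  also have "\<dots> \<le> (\<Sum>m<K. Phi_excess \<Phi> (of_nat K * \<integral>\<^sup>+u'. incr_sup m (u, u') \<partial>PU)) / of_nat K"
    by (rule Phi_excess_sum_le[OF \<Phi>_mono \<Phi>_convex K_pos])
  also have "\<dots> \<le> (\<Sum>m<K. \<integral>\<^sup>+u'. Phi_excess \<Phi> (of_nat K * incr_sup m (u, u')) \<partial>PU) / of_nat K"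
  proof (intro divide_right_mono_ennreal sum_mono)
    fix m
    have "Phi_excess \<Phi> (of_nat K * \<integral>\<^sup>+u'. incr_sup m (u, u') \<partial>PU)
        = Phi_excess \<Phi> (\<integral>\<^sup>+u'. of_nat K * incr_sup m (u, u') \<partial>PU)"
      by (subst nn_integral_cmult) auto
    also have "\<dots> \<le> (\<integral>\<^sup>+u'. Phi_excess \<Phi> (of_nat K * incr_sup m (u, u')) \<partial>PU)"
      by (rule Phi_excess_nn_integral_le[OF \<Phi>_mono \<Phi>_convex prob_space_PU]) measurable
    finally show "Phi_excess \<Phi> (of_nat K * \<integral>\<^sup>+u'. incr_sup m (u, u') \<partial>PU)
        \<le> (\<integral>\<^sup>+u'. Phi_excess \<Phi> (of_nat K * incr_sup m (u, u')) \<partial>PU)" .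
  qed
  finally show ?thesis .
qed

lemma nn_integral_Phi_excess_deviation_le:
  "(\<integral>\<^sup>+\<omega>. Phi_excess \<Phi> (SUP g\<in>G. ennreal \<bar>(1 / vol) * (\<Sum>j\<in>box. g (Z j \<omega>)) - mean g\<bar>) \<partial>M)
    \<le> (\<Sum>m<K. \<integral>\<^sup>+z. Phi_excess \<Phi> (of_nat K * incr_sup m z) \<partial>PU2) / of_nat K"
proof -
  interpret PU: prob_space PU by (rule prob_space_PU)
  have incr_meas[measurable]:
      "(\<lambda>z. Phi_excess \<Phi> (of_nat K * incr_sup m z)) \<in> borel_measurable (PU \<Otimes>\<^sub>M PU)" for m
    using \<Phi>_mono unfolding PU2_def[symmetric] by measurable
  then have [measurable]:
      "(\<lambda>u. \<integral>\<^sup>+u'. Phi_excess \<Phi> (of_nat K * incr_sup m (u, u')) \<partial>PU) \<in> borel_measurable PU" for m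
    using PU.borel_measurable_nn_integral_fst by simp
  have "(\<integral>\<^sup>+\<omega>. Phi_excess \<Phi> (SUP g\<in>G. ennreal \<bar>(1 / vol) * (\<Sum>j\<in>box. g (Z j \<omega>)) - mean g\<bar>) \<partial>M)
      = (\<integral>\<^sup>+\<omega>. Phi_excess \<Phi> (SUP g\<in>G. ennreal \<bar>avg g (U_vec \<omega>) - mean g\<bar>) \<partial>M)"
    using AE_Z_eq_Z_of by (intro nn_integral_cong_AE) (auto simp: avg_def elim!: eventually_mono)
  also have "\<dots> \<le> (\<integral>\<^sup>+\<omega>. (\<Sum>m<K. \<integral>\<^sup>+u'. Phi_excess \<Phi> (of_nat K * incr_sup m (U_vec \<omega>, u')) \<partial>PU)
      / of_nat K \<partial>M)"
    by (intro nn_integral_mono Phi_excess_deviation_le measurable_space[OF measurable_U_vec])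
  also have "\<dots> = (\<integral>\<^sup>+u. (\<Sum>m<K. \<integral>\<^sup>+u'. Phi_excess \<Phi> (of_nat K * incr_sup m (u, u')) \<partial>PU)
      / of_nat K \<partial>PU)"
    by (subst distr_U_vec[symmetric], subst nn_integral_distr) auto
  also have "\<dots> = (\<Sum>m<K. \<integral>\<^sup>+u. \<integral>\<^sup>+u'. Phi_excess \<Phi> (of_nat K * incr_sup m (u, u')) \<partial>PU \<partial>PU) / of_nat K"
    by (subst nn_integral_divide, measurable, subst nn_integral_sum) auto
  also have "\<dots> = (\<Sum>m<K. \<integral>\<^sup>+z. Phi_excess \<Phi> (of_nat K * incr_sup m z) \<partial>PU2) / of_nat K"
    unfolding PU2_def by (simp add: PU.nn_integral_fst[OF incr_meas])
  finally show ?thesis .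
qed

subsection \<open>Exchanging coordinates between the two copies\<close>

lemma hybrid_Suc_apply:
  "c \<in> U_idx \<Longrightarrow> m < K \<Longrightarrow> hybrid (Suc m) z c = (if pattern c = enum ! m then fst z c else hybrid m z c)"
  by (simp add: hybrid_apply set_take_Suc_enum)

lemma hybrid_swap_copies_apply:
  assumes c: "c \<in> U_idx" and m: "m < K" and S: "S \<subseteq> {c. pattern c = enum ! m}"
  shows "hybrid (Suc m) (swap_copies U_idx S z) c = (if c \<in> S then hybrid m z c else hybrid (Suc m) z c)"
    and "hybrid m (swap_copies U_idx S z) c = (if c \<in> S then hybrid (Suc m) z c else hybrid m z c)"
  using c S enum_nth_notin_take[OF m]
  by (auto simp: hybrid_apply swap_copies_def set_take_Suc_enum[OF m])

lemma swap_copies_increment: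
  fixes s :: "('k \<Rightarrow> nat) \<Rightarrow> real" and g :: "'b \<Rightarrow> real"
  assumes m: "m < K" and j: "j \<in> box" and s: "s (odot j (enum ! m)) \<in> {-1, 1}"
    and S: "S = {c. pattern c = enum ! m \<and> s c = -1}"
  shows "g (Z_of j (hybrid (Suc m) (swap_copies U_idx S z))) - g (Z_of j (hybrid m (swap_copies U_idx S z)))
       = s (odot j (enum ! m)) * (g (Z_of j (hybrid (Suc m) z)) - g (Z_of j (hybrid m z)))"
proof -
  have S_sub: "S \<subseteq> {c. pattern c = enum ! m}" using S by auto
  have j_pos: "j \<in> pos_idx" using j box_subset_pos_idx by auto
  note c = odot_in_U_idx[OF j]
  have in_S: "odot j e \<in> S \<longleftrightarrow> e = enum ! m \<and> s (odot j (enum ! m)) = -1" if "e \<in> patterns" for e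
    using pattern_odot[OF j_pos that] by (auto simp: S)
  from s consider "s (odot j (enum ! m)) = 1" | "s (odot j (enum ! m)) = -1" by auto
  then show ?thesis
  proof cases
    case 1
    then have "Z_of j (hybrid n (swap_copies U_idx S z)) = Z_of j (hybrid n z)" if "n \<in> {m, Suc m}" for n
      using that by (intro Z_of_cong) (auto simp: hybrid_swap_copies_apply[OF c m S_sub] in_S)
    with 1 show ?thesis by simp
  next
    case 2
    \<comment> \<open>Of the coordinates of pattern \<open>enum ! m\<close>, \<open>Z_of j\<close> reads only \<open>odot j (enum ! m)\<close>,
      which lies in \<open>S\<close>: the swap exchanges the two hybrids.\<close>
    have "Z_of j (hybrid (Suc m) (swap_copies U_idx S z)) = Z_of j (hybrid m z)"
      "Z_of j (hybrid m (swap_copies U_idx S z)) = Z_of j (hybrid (Suc m) z)"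
      using 2 by (auto intro!: Z_of_cong simp: hybrid_swap_copies_apply[OF c m S_sub] in_S
          hybrid_Suc_apply[OF c m, where z=z] pattern_odot[OF j_pos])
    with 2 show ?thesis by simp
  qed
qed

lemma incr_sup_swap_copies_le:
  assumes m: "m < K" and s: "\<forall>c\<in>U_idx. s c \<in> {-1, 1}"
    and S: "S = {c. pattern c = enum ! m \<and> s c = -1}"
  shows "incr_sup m (swap_copies U_idx S z)
    \<le> rad_sup (enum ! m) s (\<lambda>j. Z_of j (hybrid (Suc m) z)) + rad_sup (enum ! m) s (\<lambda>j. Z_of j (hybrid m z))"
  unfolding incr_sup_def
proof (rule SUP_least)
  fix g assume g: "g \<in> G"
  define a where "a = (1 / vol) * (\<Sum>j\<in>box. s (odot j (enum ! m)) * g (Z_of j (hybrid (Suc m) z)))"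
  define b where "b = (1 / vol) * (\<Sum>j\<in>box. s (odot j (enum ! m)) * g (Z_of j (hybrid m z)))"
  have "avg g (hybrid (Suc m) (swap_copies U_idx S z)) - avg g (hybrid m (swap_copies U_idx S z))
      = (1 / vol) * (\<Sum>j\<in>box. g (Z_of j (hybrid (Suc m) (swap_copies U_idx S z)))
          - g (Z_of j (hybrid m (swap_copies U_idx S z))))"
    by (simp add: avg_def sum_subtractf right_diff_distrib)
  also have "\<dots> = (1 / vol) * (\<Sum>j\<in>box. s (odot j (enum ! m))
      * (g (Z_of j (hybrid (Suc m) z)) - g (Z_of j (hybrid m z))))"
    using swap_copies_increment[OF m _ _ S] s odot_in_U_idx enum_nth_in_patterns[OF m]
    by (intro arg_cong[where f="\<lambda>x. (1 / vol) * x"] sum.cong) auto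
  also have "\<dots> = a - b"
    by (simp add: a_def b_def sum_subtractf right_diff_distrib)
  finally have "ennreal \<bar>avg g (hybrid (Suc m) (swap_copies U_idx S z)) - avg g (hybrid m (swap_copies U_idx S z))\<bar>
      \<le> ennreal \<bar>a\<bar> + ennreal \<bar>b\<bar>"
    by (simp add: ennreal_plus[symmetric] del: ennreal_plus)
  also have "\<dots> \<le> rad_sup (enum ! m) s (\<lambda>j. Z_of j (hybrid (Suc m) z)) + rad_sup (enum ! m) s (\<lambda>j. Z_of j (hybrid m z))"
    unfolding rad_sup_def a_def b_def using g by (intro add_mono SUP_upper)
  finally show "ennreal \<bar>avg g (hybrid (Suc m) (swap_copies U_idx S z)) - avg g (hybrid m (swap_copies U_idx S z))\<bar>
      \<le> rad_sup (enum ! m) s (\<lambda>j. Z_of j (hybrid (Suc m) z)) + rad_sup (enum ! m) s (\<lambda>j. Z_of j (hybrid m z))" .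
qed

lemma nn_integral_incr_sup_le_rad_sup:
  assumes m: "m < K" and s: "\<forall>c\<in>U_idx. s c \<in> {-1, 1}"
  shows "(\<integral>\<^sup>+z. Phi_excess \<Phi> (of_nat K * incr_sup m z) \<partial>PU2)
    \<le> (\<integral>\<^sup>+u. Phi_excess \<Phi> (2 * of_nat K * rad_sup (enum ! m) s (\<lambda>j. Z_of j u)) \<partial>PU)"
proof -
  define S where "S = {c. pattern c = enum ! m \<and> s c = -1}"
  define R where "R u = Phi_excess \<Phi> (2 * of_nat K * rad_sup (enum ! m) s (\<lambda>j. Z_of j u))" for u
  have [measurable]: "(\<lambda>z. Phi_excess \<Phi> (of_nat K * incr_sup m z))
      \<in> borel_measurable (PiM U_idx (\<lambda>_. unif01) \<Otimes>\<^sub>M PiM U_idx (\<lambda>_. unif01))"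
    using \<Phi>_mono unfolding PU_def[symmetric] PU2_def[symmetric] by measurable
  have R_meas[measurable]: "R \<in> borel_measurable PU"
    using \<Phi>_mono unfolding R_def by measurable
  have R_hybrid: "(\<integral>\<^sup>+z. R (hybrid n z) \<partial>PU2) = (\<integral>\<^sup>+u. R u \<partial>PU)" for n
    using R_meas unfolding PU2_def PU_def hybrid_def
    by (rule nn_integral_mix_copies[OF prob_space_unif01 finite_U_idx])
  have "(\<integral>\<^sup>+z. Phi_excess \<Phi> (of_nat K * incr_sup m z) \<partial>PU2)
      = (\<integral>\<^sup>+z. Phi_excess \<Phi> (of_nat K * incr_sup m (swap_copies U_idx S z)) \<partial>PU2)"
    unfolding PU2_def PU_def by (rule nn_integral_swap_copies[OF prob_space_unif01 finite_U_idx, symmetric]) simp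
  also have "\<dots> \<le> (\<integral>\<^sup>+z. (R (hybrid (Suc m) z) + R (hybrid m z)) / 2 \<partial>PU2)"
  proof (rule nn_integral_mono)
    fix z
    have "Phi_excess \<Phi> (of_nat K * incr_sup m (swap_copies U_idx S z))
        \<le> Phi_excess \<Phi> (of_nat K * rad_sup (enum ! m) s (\<lambda>j. Z_of j (hybrid (Suc m) z))
            + of_nat K * rad_sup (enum ! m) s (\<lambda>j. Z_of j (hybrid m z)))"
      unfolding distrib_left[symmetric]
      by (intro monoD[OF mono_Phi_excess[OF \<Phi>_mono]] mult_left_mono incr_sup_swap_copies_le[OF m s S_def])
        simp
    also have "\<dots> \<le> (R (hybrid (Suc m) z) + R (hybrid m z)) / 2"
      unfolding R_def mult.assoc by (rule Phi_excess_add_le[OF \<Phi>_mono \<Phi>_convex])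
    finally show "Phi_excess \<Phi> (of_nat K * incr_sup m (swap_copies U_idx S z))
        \<le> (R (hybrid (Suc m) z) + R (hybrid m z)) / 2" .
  qed
  also have "\<dots> = ((\<integral>\<^sup>+z. R (hybrid (Suc m) z) \<partial>PU2) + (\<integral>\<^sup>+z. R (hybrid m z) \<partial>PU2)) / 2"
    by (subst nn_integral_divide, measurable, subst nn_integral_add) auto
  also have "\<dots> = (\<integral>\<^sup>+u. R u \<partial>PU)"
    unfolding R_hybrid by (simp add: mult_2[symmetric] mult.commute[of 2] ennreal_mult_divide_eq)
  finally show ?thesis unfolding R_def .
qed

subsection \<open>Integrating over the Rademacher signs\<close>

definition law_eps :: "(('k \<Rightarrow> nat) \<Rightarrow> real) measure" where
  "law_eps = distr M (PiM UNIV (\<lambda>_. borel)) (\<lambda>\<omega> c. \<epsilon> c \<omega>)"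

definition law_Z :: "(('k \<Rightarrow> nat) \<Rightarrow> 'b) measure" where
  "law_Z = distr M (PiM pos_idx (\<lambda>_. borel)) (\<lambda>\<omega>. restrict (\<lambda>j. Z j \<omega>) pos_idx)"

lemma measurable_eps_vec[measurable]: "(\<lambda>\<omega> c. \<epsilon> c \<omega>) \<in> M \<rightarrow>\<^sub>M PiM UNIV (\<lambda>_. borel)"
proof -
  have "(\<lambda>\<omega>. \<lambda>c\<in>UNIV. \<epsilon> c \<omega>) \<in> M \<rightarrow>\<^sub>M PiM UNIV (\<lambda>_. borel)"
    by (intro measurable_restrict \<epsilon>_meas)
  then show ?thesis by (simp only: restrict_UNIV)
qed

lemma measurable_Z_vec[measurable]:
  "(\<lambda>\<omega>. restrict (\<lambda>j. Z j \<omega>) pos_idx) \<in> M \<rightarrow>\<^sub>M PiM pos_idx (\<lambda>_. borel)"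
  by (intro measurable_restrict Z_meas) (simp add: pos_idx_def)

lemma prob_space_law_eps: "prob_space law_eps"
  unfolding law_eps_def by (rule prob_space.prob_space_distr[OF M measurable_eps_vec])

lemma prob_space_law_Z: "prob_space law_Z"
  unfolding law_Z_def by (rule prob_space.prob_space_distr[OF M measurable_Z_vec])

lemma AE_law_eps_signs: "AE s in law_eps. \<forall>c\<in>U_idx. s c \<in> {-1, 1}"
proof -
  interpret prob_space M by (rule M)
  have [measurable]: "\<epsilon> c \<in> borel_measurable M" for c by (rule \<epsilon>_meas)
  have "AE \<omega> in M. \<epsilon> c \<omega> \<in> {-1, 1}" for c
  proof -
    have "prob {\<omega> \<in> space M. \<epsilon> c \<omega> \<in> {-1, 1}}
        = prob {\<omega> \<in> space M. \<epsilon> c \<omega> = 1} + prob {\<omega> \<in> space M. \<epsilon> c \<omega> = -1}"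
      by (subst finite_measure_Union[symmetric]) (auto intro!: arg_cong[where f=prob])
    then have "prob {\<omega> \<in> space M. \<epsilon> c \<omega> \<in> {-1, 1}} = 1"
      using \<epsilon>_rad[of c] by simp
    from AE_prob_1[OF this] show ?thesis by (rule eventually_mono) simp
  qed
  then have "AE \<omega> in M. \<forall>c\<in>U_idx. \<epsilon> c \<omega> \<in> {-1, 1}"
    using finite_U_idx by (intro AE_finite_allI) auto
  then show ?thesis
    unfolding law_eps_def by (subst AE_distr_iff) (auto simp: finite_U_idx)
qed

lemma nn_integral_incr_sup_le_law_eps:
  assumes m: "m < K"
  shows "(\<integral>\<^sup>+z. Phi_excess \<Phi> (of_nat K * incr_sup m z) \<partial>PU2)
    \<le> (\<integral>\<^sup>+s. \<integral>\<^sup>+u. Phi_excess \<Phi> (2 * of_nat K * rad_sup (enum ! m) s (\<lambda>j. Z_of j u)) \<partial>PU \<partial>law_eps)"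
proof -
  interpret law_eps: prob_space law_eps by (rule prob_space_law_eps)
  have "(\<integral>\<^sup>+z. Phi_excess \<Phi> (of_nat K * incr_sup m z) \<partial>PU2)
      = (\<integral>\<^sup>+s. (\<integral>\<^sup>+z. Phi_excess \<Phi> (of_nat K * incr_sup m z) \<partial>PU2) \<partial>law_eps)"
    by (simp add: law_eps.emeasure_space_1)
  also have "\<dots> \<le> (\<integral>\<^sup>+s. \<integral>\<^sup>+u. Phi_excess \<Phi> (2 * of_nat K * rad_sup (enum ! m) s (\<lambda>j. Z_of j u)) \<partial>PU \<partial>law_eps)"
    using AE_law_eps_signs
    by (intro nn_integral_mono_AE) (auto elim!: eventually_mono intro: nn_integral_incr_sup_le_rad_sup[OF m])
  finally show ?thesis .
qed

lemma distr_eps_Z: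
  "distr M (PiM UNIV (\<lambda>_. borel) \<Otimes>\<^sub>M PiM pos_idx (\<lambda>_. borel))
     (\<lambda>\<omega>. ((\<lambda>c. \<epsilon> c \<omega>), restrict (\<lambda>j. Z j \<omega>) pos_idx)) = law_eps \<Otimes>\<^sub>M law_Z"
  unfolding law_eps_def law_Z_def
  using \<epsilon>_Z_indep unfolding pos_idx_def[symmetric]
  by (intro distr_pair_eq_pair_measure M measurable_eps_vec measurable_Z_vec)

lemma rad_sup_cong: "(\<And>j. j \<in> box \<Longrightarrow> z j = z' j) \<Longrightarrow> rad_sup e s z = rad_sup e s z'"
  unfolding rad_sup_def by (intro SUP_cong arg_cong[where f="\<lambda>x. ennreal \<bar>(1 / vol) * x\<bar>"] sum.cong) auto

lemma nn_integral_law_Z: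
  assumes h[measurable]: "h \<in> borel_measurable borel"
  shows "(\<integral>\<^sup>+z. h (rad_sup e s z) \<partial>law_Z) = (\<integral>\<^sup>+u. h (rad_sup e s (\<lambda>j. Z_of j u)) \<partial>PU)"
proof -
  have [measurable]: "(\<lambda>z. rad_sup e s z) \<in> borel_measurable (PiM pos_idx (\<lambda>_. borel))"
    using measurable_compose[OF measurable_Pair1'[of s] measurable_rad_sup[of e]] by (simp add: space_PiM)
  have "(\<integral>\<^sup>+z. h (rad_sup e s z) \<partial>law_Z) = (\<integral>\<^sup>+\<omega>. h (rad_sup e s (restrict (\<lambda>j. Z j \<omega>) pos_idx)) \<partial>M)"
    unfolding law_Z_def by (subst nn_integral_distr) auto
  also have "\<dots> = (\<integral>\<^sup>+\<omega>. h (rad_sup e s (\<lambda>j. Z_of j (U_vec \<omega>))) \<partial>M)"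
    using AE_Z_eq_Z_of box_subset_pos_idx
    by (intro nn_integral_cong_AE) (auto elim!: eventually_mono intro!: arg_cong[where f=h] rad_sup_cong)
  also have "\<dots> = (\<integral>\<^sup>+u. h (rad_sup e s (\<lambda>j. Z_of j u)) \<partial>PU)"
    by (subst distr_U_vec[symmetric], subst nn_integral_distr) auto
  finally show ?thesis .
qed

lemma nn_integral_rad_sup_eq:
  assumes h[measurable]: "h \<in> borel_measurable borel"
  shows "(\<integral>\<^sup>+\<omega>. h (rad_sup e (\<lambda>c. \<epsilon> c \<omega>) (\<lambda>j. Z j \<omega>)) \<partial>M)
    = (\<integral>\<^sup>+s. \<integral>\<^sup>+u. h (rad_sup e s (\<lambda>j. Z_of j u)) \<partial>PU \<partial>law_eps)"
proof -
  interpret law_Z: prob_space law_Z by (rule prob_space_law_Z)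
  interpret law_eps: prob_space law_eps by (rule prob_space_law_eps)
  interpret pair_sigma_finite law_eps law_Z ..
  have sets_eq: "sets (law_eps \<Otimes>\<^sub>M law_Z) = sets (PiM UNIV (\<lambda>_. borel) \<Otimes>\<^sub>M PiM pos_idx (\<lambda>_. borel))"
    by (simp add: law_eps_def law_Z_def)
  have F_meas[measurable]: "(\<lambda>(s, z). h (rad_sup e s z)) \<in> borel_measurable (law_eps \<Otimes>\<^sub>M law_Z)"
    unfolding measurable_cong_sets[OF sets_eq refl] by measurable
  have "(\<integral>\<^sup>+\<omega>. h (rad_sup e (\<lambda>c. \<epsilon> c \<omega>) (\<lambda>j. Z j \<omega>)) \<partial>M)
      = (\<integral>\<^sup>+\<omega>. (\<lambda>(s, z). h (rad_sup e s z)) ((\<lambda>c. \<epsilon> c \<omega>), restrict (\<lambda>j. Z j \<omega>) pos_idx) \<partial>M)"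
    using box_subset_pos_idx by (auto intro!: nn_integral_cong arg_cong[where f=h] rad_sup_cong)
  also have "\<dots> = (\<integral>\<^sup>+y. (\<lambda>(s, z). h (rad_sup e s z)) y \<partial>(law_eps \<Otimes>\<^sub>M law_Z))"
    unfolding distr_eps_Z[symmetric] using F_meas by (subst nn_integral_distr) (auto simp: sets_eq)
  also have "\<dots> = (\<integral>\<^sup>+s. \<integral>\<^sup>+z. h (rad_sup e s z) \<partial>law_Z \<partial>law_eps)"
    by (subst law_Z.nn_integral_fst[OF F_meas, symmetric]) simp
  also have "\<dots> = (\<integral>\<^sup>+s. \<integral>\<^sup>+u. h (rad_sup e s (\<lambda>j. Z_of j u)) \<partial>PU \<partial>law_eps)"
    by (simp add: nn_integral_law_Z)
  finally show ?thesis .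
qed

theorem symmetrization_inequality:
  "lexp M (\<Phi> 0)
     (\<lambda>\<omega>. Phi_ext \<Phi> (SUP g\<in>G. ennreal \<bar>(1 / real (prod C UNIV)) *
        (\<Sum>j\<in>{j. \<forall>i. 1 \<le> j i \<and> j i \<le> C i}. g (Z j \<omega>)) - (\<integral>\<omega>'. g (Z (\<lambda>_. 1) \<omega>') \<partial>M)\<bar>))
   \<le> ereal (1 / (2 ^ CARD('k) - 1)) *
     (\<Sum>e\<in>{e. (\<forall>i. e i \<le> 1) \<and> e \<noteq> (\<lambda>_. 0)}.
        lexp M (\<Phi> 0)
          (\<lambda>\<omega>. Phi_ext \<Phi> (ennreal (2 * (2 ^ CARD('k) - 1)) *
             (SUP g\<in>G. ennreal \<bar>(1 / real (prod C UNIV)) *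
                (\<Sum>j\<in>{j. \<forall>i. 1 \<le> j i \<and> j i \<le> C i}. \<epsilon> (odot j e) \<omega> * g (Z j \<omega>))\<bar>))))"
  (is "?lhs \<le> ereal ?c * (\<Sum>e\<in>?E. ?rhs e)")
proof -
  define L where
    "L = (\<integral>\<^sup>+\<omega>. Phi_excess \<Phi> (SUP g\<in>G. ennreal \<bar>(1 / vol) * (\<Sum>j\<in>box. g (Z j \<omega>)) - mean g\<bar>) \<partial>M)"
  define R where
    "R e = (\<integral>\<^sup>+\<omega>. Phi_excess \<Phi> (2 * of_nat K * rad_sup e (\<lambda>c. \<epsilon> c \<omega>) (\<lambda>j. Z j \<omega>)) \<partial>M)" for e
  have [measurable]: "(\<lambda>x. Phi_excess \<Phi> (2 * of_nat K * x)) \<in> borel_measurable borel"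
    using \<Phi>_mono by measurable
  have "L \<le> (\<Sum>m<K. \<integral>\<^sup>+z. Phi_excess \<Phi> (of_nat K * incr_sup m z) \<partial>PU2) / of_nat K"
    unfolding L_def by (rule nn_integral_Phi_excess_deviation_le)
  also have "\<dots> \<le> (\<Sum>m<K. R (enum ! m)) / of_nat K"
    unfolding R_def nn_integral_rad_sup_eq[OF \<open>_ \<in> borel_measurable borel\<close>]
    by (intro divide_right_mono_ennreal sum_mono nn_integral_incr_sup_le_law_eps) simp
  also have "(\<Sum>m<K. R (enum ! m)) = (\<Sum>e\<in>patterns. R e)"
    using sum.reindex_bij_betw[OF bij_betw_nth[OF distinct_enum refl refl], of R] set_enum
    by (simp add: K_def lessThan_atLeast0)
  finally have avg: "ereal (\<Phi> 0) + enn2ereal L \<le> ereal (1 / real K) * (\<Sum>e\<in>patterns. ereal (\<Phi> 0) + enn2ereal (R e))"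
    by (rule ereal_add_le_average[OF finite_patterns K_eq_card[symmetric] K_pos])
  have lhs: "?lhs = ereal (\<Phi> 0) + enn2ereal L"
    unfolding L_def vol_def box_def mean_def by (rule lexp_Phi_ext)
  have rhs: "?rhs e = ereal (\<Phi> 0) + enn2ereal (R e)" for e
  proof -
    have two_K: "ennreal (2 * real K) = 2 * of_nat K"
      by (simp add: ennreal_mult ennreal_of_nat_eq_real_of_nat)
    show ?thesis
      unfolding R_def rad_sup_def vol_def box_def real_K[symmetric] two_K by (rule lexp_Phi_ext)
  qed
  have c: "?c = 1 / real K" and E: "?E = patterns"
    by (simp_all add: real_K patterns_def)
  show ?thesis
    unfolding lhs rhs c E by (rule avg)
qed

end

theorem lemma4:
  fixes M :: "'a measure"
    and Z :: "('k::finite \<Rightarrow> nat) \<Rightarrow> 'a \<Rightarrow> 'b::polish_space"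
    and U :: "('k \<Rightarrow> nat) \<Rightarrow> 'a \<Rightarrow> real"
    and \<tau> :: "(('k \<Rightarrow> nat) \<Rightarrow> real) \<Rightarrow> 'b"
    and \<epsilon> :: "('k \<Rightarrow> nat) \<Rightarrow> 'a \<Rightarrow> real"
    and G :: "('b \<Rightarrow> real) set"
    and \<Phi> :: "real \<Rightarrow> real"
    and C :: "'k \<Rightarrow> nat"
  assumes M: "prob_space M"
    and Z_meas: "\<And>j. (\<forall>i. 1 \<le> j i) \<Longrightarrow> Z j \<in> measurable M borel"
    and U_meas: "\<And>c. c \<noteq> (\<lambda>_. 0) \<Longrightarrow> U c \<in> borel_measurable M"
    and U_unif: "\<And>c. c \<noteq> (\<lambda>_. 0) \<Longrightarrow> distr M borel (U c) = uniform_measure lborel {0..1}"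
    and U_indep: "prob_space.indep_vars M (\<lambda>_. borel) U {c. c \<noteq> (\<lambda>_. 0)}"
    and \<tau>_meas: "\<tau> \<in> measurable
        (Pi\<^sub>M {e. (\<forall>i. e i \<le> 1) \<and> e \<noteq> (\<lambda>_. 0)} (\<lambda>_. borel)) borel"
    and Z_repr: "AE \<omega> in M. \<forall>j. (\<forall>i. 1 \<le> j i) \<longrightarrow>
        Z j \<omega> = \<tau> (restrict (\<lambda>e. U (odot j e) \<omega>) {e. (\<forall>i. e i \<le> 1) \<and> e \<noteq> (\<lambda>_. 0)})"
    and G_pm: "pointwise_measurable G"
    and G_meas: "\<And>g. g \<in> G \<Longrightarrow> g \<in> borel_measurable borel"
    and G_int: "\<And>g. g \<in> G \<Longrightarrow> integrable M (\<lambda>\<omega>. g (Z (\<lambda>_. 1) \<omega>))"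
    and \<Phi>_mono: "mono_on {0..} \<Phi>"
    and \<Phi>_convex: "convex_on {0..} \<Phi>"
    and \<epsilon>_meas: "\<And>c. \<epsilon> c \<in> borel_measurable M"
    and \<epsilon>_rad: "\<And>c. measure M {\<omega> \<in> space M. \<epsilon> c \<omega> = 1} = 1/2
                 \<and> measure M {\<omega> \<in> space M. \<epsilon> c \<omega> = -1} = 1/2"
    and \<epsilon>_indep: "prob_space.indep_vars M (\<lambda>_. borel) \<epsilon> UNIV"
    and \<epsilon>_Z_indep: "\<And>A B. A \<in> sets (Pi\<^sub>M UNIV (\<lambda>_. (borel :: real measure))) \<Longrightarrow>
        B \<in> sets (Pi\<^sub>M {j. \<forall>i. 1 \<le> j i} (\<lambda>_. (borel :: 'b measure))) \<Longrightarrow>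
        measure M {\<omega> \<in> space M. (\<lambda>c. \<epsilon> c \<omega>) \<in> A \<and>
                      restrict (\<lambda>j. Z j \<omega>) {j. \<forall>i. 1 \<le> j i} \<in> B}
        = measure M {\<omega> \<in> space M. (\<lambda>c. \<epsilon> c \<omega>) \<in> A}
          * measure M {\<omega> \<in> space M. restrict (\<lambda>j. Z j \<omega>) {j. \<forall>i. 1 \<le> j i} \<in> B}"
    and C_pos: "\<forall>i. 1 \<le> C i"
  shows "lexp M (\<Phi> 0)
           (\<lambda>\<omega>. Phi_ext \<Phi> (SUP g\<in>G. ennreal \<bar>(1 / real (prod C UNIV)) *
              (\<Sum>j\<in>{j. \<forall>i. 1 \<le> j i \<and> j i \<le> C i}. g (Z j \<omega>))
              - (\<integral>\<omega>'. g (Z (\<lambda>_. 1) \<omega>') \<partial>M)\<bar>))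
         \<le> ereal (1 / (2 ^ CARD('k) - 1)) *
           (\<Sum>e\<in>{e. (\<forall>i. e i \<le> 1) \<and> e \<noteq> (\<lambda>_. 0)}.
              lexp M (\<Phi> 0)
                (\<lambda>\<omega>. Phi_ext \<Phi> (ennreal (2 * (2 ^ CARD('k) - 1)) *
                   (SUP g\<in>G. ennreal \<bar>(1 / real (prod C UNIV)) *
                      (\<Sum>j\<in>{j. \<forall>i. 1 \<le> j i \<and> j i \<le> C i}. \<epsilon> (odot j e) \<omega> * g (Z j \<omega>))\<bar>))))"
proof -
  have "symmetrization M Z U \<tau> \<epsilon> G \<Phi> C"
    by (rule symmetrization.intro; fact)
  then show ?thesis by (rule symmetrization.symmetrization_inequality)
qed

end
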